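(* Let $A$ be a Noetherian commutative ring with identity, let $A[\mathbf{x}]=A[x_1,\ldots,x_n]$ be equipped with a monomial order, let $I\subset A[\mathbf{x}]$ be a proper ideal, and define $M=A[\mathbf{x}]/I$. Suppose that for each prime $p\subset A$ and for each monomial $\mathbf{x}^E$, the ideal $\mathrm{in}(I)_E\,B$ is either $(0)$ or $(1)$, where $B=A_p/(I\cap A)_p$. Then $M$ is a faithfully flat $A/(I\cap A)$-module.
   Context: A monomial order $>$ is a total order on monomials such that $\mathbf{x}^E>\mathbf{x}^F$ implies $\mathbf{x}^G\mathbf{x}^E>\mathbf{x}^G\mathbf{x}^F$, and $x_i>1$ for each $i$. $\mathrm{in}(f)$ is the greatest term $c\,\mathbf{x}^E$ ($c\neq0$) of a nonzero polynomial $f$; $\mathrm{in}(I)$ is the ideal generated by all $\mathrm{in}(f)$, $f\in I$. For an ideal $J\subset A[\mathbf{x}]$ and exponent $E$, the coefficient ideal is $J_E=(c\in A\mid c\,\mathbf{x}^E\in J)\subset A$; $J_E B$ is the ideal of $B$ generated by its image. *)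

theory Defs
  imports Main "HOL-Library.Poly_Mapping"
begin

definition is_ideal :: "'a::comm_ring_1 set \<Rightarrow> bool" where
  "is_ideal J \<longleftrightarrow> 0 \<in> J \<and> (\<forall>x\<in>J. \<forall>y\<in>J. x + y \<in> J) \<and> (\<forall>r. \<forall>x\<in>J. r * x \<in> J)"

definition gen_ideal :: "'a::comm_ring_1 set \<Rightarrow> 'a set" where
  "gen_ideal S = \<Inter>{J. is_ideal J \<and> S \<subseteq> J}"

definition prime_ideal :: "'a::comm_ring_1 set \<Rightarrow> bool" where
  "prime_ideal P \<longleftrightarrow> is_ideal P \<and> P \<noteq> UNIV \<and> (\<forall>a b. a * b \<in> P \<longrightarrow> a \<in> P \<or> b \<in> P)"

definition noetherian :: "'a::comm_ring_1 itself \<Rightarrow> bool" where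
  "noetherian _ \<longleftrightarrow> (\<forall>J::'a set. is_ideal J \<longrightarrow> (\<exists>F. finite F \<and> F \<subseteq> J \<and> J = gen_ideal F))"

text \<open>Monomials x^E are exponent vectors; polynomials are
  finitely supported maps from monomials to coefficients, polynomials with coefficients in 'a.
  The relation \<open>ord F E\<close> means x^E > x^F.\<close>

definition monomial_order :: "(('v \<Rightarrow>\<^sub>0 nat) \<Rightarrow> ('v \<Rightarrow>\<^sub>0 nat) \<Rightarrow> bool) \<Rightarrow> bool" where
  "monomial_order ord \<longleftrightarrow>
     (\<forall>E. \<not> ord E E) \<and>
     (\<forall>E F G. ord E F \<longrightarrow> ord F G \<longrightarrow> ord E G) \<and>
     (\<forall>E F. E \<noteq> F \<longrightarrow> ord E F \<or> ord F E) \<and>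
     (\<forall>E F G. ord F E \<longrightarrow> ord (G + F) (G + E)) \<and>
     (\<forall>i. ord 0 (Poly_Mapping.single i 1))"

definition lead_exp :: "(('v \<Rightarrow>\<^sub>0 nat) \<Rightarrow> ('v \<Rightarrow>\<^sub>0 nat) \<Rightarrow> bool) \<Rightarrow> (('v \<Rightarrow>\<^sub>0 nat) \<Rightarrow>\<^sub>0 'a::zero) \<Rightarrow> ('v \<Rightarrow>\<^sub>0 nat)" where
  "lead_exp ord f = (THE E. E \<in> Poly_Mapping.keys f \<and> (\<forall>F\<in>Poly_Mapping.keys f. F \<noteq> E \<longrightarrow> ord F E))"

definition init_term :: "(('v \<Rightarrow>\<^sub>0 nat) \<Rightarrow> ('v \<Rightarrow>\<^sub>0 nat) \<Rightarrow> bool) \<Rightarrow> (('v \<Rightarrow>\<^sub>0 nat) \<Rightarrow>\<^sub>0 'a::zero) \<Rightarrow> (('v \<Rightarrow>\<^sub>0 nat) \<Rightarrow>\<^sub>0 'a)" where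
  "init_term ord f = Poly_Mapping.single (lead_exp ord f) (Poly_Mapping.lookup f (lead_exp ord f))"

definition init_ideal :: "(('v \<Rightarrow>\<^sub>0 nat) \<Rightarrow> ('v \<Rightarrow>\<^sub>0 nat) \<Rightarrow> bool) \<Rightarrow> (('v \<Rightarrow>\<^sub>0 nat) \<Rightarrow>\<^sub>0 'a::comm_ring_1) set \<Rightarrow> (('v \<Rightarrow>\<^sub>0 nat) \<Rightarrow>\<^sub>0 'a) set" where
  "init_ideal ord I = gen_ideal {init_term ord f | f. f \<in> I \<and> f \<noteq> 0}"

definition coeff_ideal :: "(('v \<Rightarrow>\<^sub>0 nat) \<Rightarrow>\<^sub>0 'a::comm_ring_1) set \<Rightarrow> ('v \<Rightarrow>\<^sub>0 nat) \<Rightarrow> 'a set" where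
  "coeff_ideal J E = {c. Poly_Mapping.single E c \<in> J}"

text \<open>I \<inter> A, with A embedded in A[x] as constant polynomials.\<close>
definition contraction :: "(('v \<Rightarrow>\<^sub>0 nat) \<Rightarrow>\<^sub>0 'a::comm_ring_1) set \<Rightarrow> 'a set" where
  "contraction I = {c. Poly_Mapping.single 0 c \<in> I}"

text \<open>Elements of B are represented by fractions (a, s) with s \<notin> p; two fractions
  represent the same element of A_p/K_p iff u (a t - b s) \<in> K for some u \<notin> p.\<close>

definition loc_eq :: "'a::comm_ring_1 set \<Rightarrow> 'a set \<Rightarrow> 'a \<times> 'a \<Rightarrow> 'a \<times> 'a \<Rightarrow> bool" where
  "loc_eq p K x y \<longleftrightarrow> (\<exists>u. u \<notin> p \<and> u * (fst x * snd y - fst y * snd x) \<in> K)"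

definition frac_add :: "'a::comm_ring_1 \<times> 'a \<Rightarrow> 'a \<times> 'a \<Rightarrow> 'a \<times> 'a" where
  "frac_add x y = (fst x * snd y + fst y * snd x, snd x * snd y)"

definition frac_mult :: "'a::comm_ring_1 \<times> 'a \<Rightarrow> 'a \<times> 'a \<Rightarrow> 'a \<times> 'a" where
  "frac_mult x y = (fst x * fst y, snd x * snd y)"

text \<open>Representatives of the elements of the ideal J B of B generated by the image of J:
  the finite sums  \<Sum> b_i (c_i / 1)  with b_i \<in> B, c_i \<in> J.\<close>
inductive_set ext_ideal :: "'a::comm_ring_1 set \<Rightarrow> 'a set \<Rightarrow> ('a \<times> 'a) set" for p J where
  ext_zero: "(0, 1) \<in> ext_ideal p J"
| ext_step: "x \<in> ext_ideal p J \<Longrightarrow> c \<in> J \<Longrightarrow> snd b \<notin> p \<Longrightarrow>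
     frac_add x (frac_mult b (c, 1)) \<in> ext_ideal p J"

definition ext_is_zero :: "'a::comm_ring_1 set \<Rightarrow> 'a set \<Rightarrow> 'a set \<Rightarrow> bool" where
  "ext_is_zero p K J \<longleftrightarrow> (\<forall>x\<in>ext_ideal p J. loc_eq p K x (0, 1))"

definition ext_is_unit :: "'a::comm_ring_1 set \<Rightarrow> 'a set \<Rightarrow> 'a set \<Rightarrow> bool" where
  "ext_is_unit p K J \<longleftrightarrow> (\<exists>x\<in>ext_ideal p J. loc_eq p K x (1, 1))"

record ('r, 'm) amod =
  mcarrier :: "'m set"
  madd :: "'m \<Rightarrow> 'm \<Rightarrow> 'm"
  mzero :: "'m"
  msmult :: "'r \<Rightarrow> 'm \<Rightarrow> 'm"

definition is_amod :: "('r::comm_ring_1, 'm) amod \<Rightarrow> bool" where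
  "is_amod N \<longleftrightarrow>
     mzero N \<in> mcarrier N \<and>
     (\<forall>x\<in>mcarrier N. \<forall>y\<in>mcarrier N. madd N x y \<in> mcarrier N) \<and>
     (\<forall>a. \<forall>x\<in>mcarrier N. msmult N a x \<in> mcarrier N) \<and>
     (\<forall>x\<in>mcarrier N. \<forall>y\<in>mcarrier N. \<forall>z\<in>mcarrier N. madd N (madd N x y) z = madd N x (madd N y z)) \<and>
     (\<forall>x\<in>mcarrier N. \<forall>y\<in>mcarrier N. madd N x y = madd N y x) \<and>
     (\<forall>x\<in>mcarrier N. madd N (mzero N) x = x) \<and>
     (\<forall>x\<in>mcarrier N. \<exists>y\<in>mcarrier N. madd N x y = mzero N) \<and>
     (\<forall>a. \<forall>x\<in>mcarrier N. \<forall>y\<in>mcarrier N. msmult N a (madd N x y) = madd N (msmult N a x) (msmult N a y)) \<and>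
     (\<forall>a b. \<forall>x\<in>mcarrier N. msmult N (a + b) x = madd N (msmult N a x) (msmult N b x)) \<and>
     (\<forall>a b. \<forall>x\<in>mcarrier N. msmult N (a * b) x = msmult N a (msmult N b x)) \<and>
     (\<forall>x\<in>mcarrier N. msmult N 1 x = x)"

definition is_submod :: "'m set \<Rightarrow> ('r::comm_ring_1, 'm) amod \<Rightarrow> bool" where
  "is_submod S N \<longleftrightarrow> S \<subseteq> mcarrier N \<and> mzero N \<in> S \<and>
     (\<forall>x\<in>S. \<forall>y\<in>S. madd N x y \<in> S) \<and> (\<forall>a. \<forall>x\<in>S. msmult N a x \<in> S)"

text \<open>An A-module is an (A/K)-module iff it is annihilated by K.\<close>
definition annihilated :: "'r::comm_ring_1 set \<Rightarrow> ('r, 'm) amod \<Rightarrow> bool" where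
  "annihilated K N \<longleftrightarrow> (\<forall>k\<in>K. \<forall>x\<in>mcarrier N. msmult N k x = mzero N)"

inductive_set zspan :: "'b::ab_group_add set \<Rightarrow> 'b set" for S where
  zspan_zero: "0 \<in> zspan S"
| zspan_add: "x \<in> zspan S \<Longrightarrow> s \<in> S \<Longrightarrow> x + s \<in> zspan S"
| zspan_diff: "x \<in> zspan S \<Longrightarrow> y \<in> zspan S \<Longrightarrow> x - y \<in> zspan S"

definition tgen :: "'n \<Rightarrow> 'm \<Rightarrow> ('n \<times> 'm) \<Rightarrow>\<^sub>0 int" where
  "tgen n m = Poly_Mapping.single (n, m) 1"

text \<open>N \<otimes>_A M is the free abelian group on carrier N \<times> carrier M modulo the subgroup
  \<open>tensor_rel N M\<close>; an element (a formal sum t) is zero in N \<otimes> M iff t \<in> tensor_rel N M.\<close>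
definition tensor_rel :: "('r::comm_ring_1, 'n) amod \<Rightarrow> ('r, 'm) amod \<Rightarrow> (('n \<times> 'm) \<Rightarrow>\<^sub>0 int) set" where
  "tensor_rel N M = zspan (
      {tgen (madd N n n') m - tgen n m - tgen n' m | n n' m.
          n \<in> mcarrier N \<and> n' \<in> mcarrier N \<and> m \<in> mcarrier M}
    \<union> {tgen n (madd M m m') - tgen n m - tgen n m' | n m m'.
          n \<in> mcarrier N \<and> m \<in> mcarrier M \<and> m' \<in> mcarrier M}
    \<union> {tgen (msmult N a n) m - tgen n (msmult M a m) | a n m.
          n \<in> mcarrier N \<and> m \<in> mcarrier M})"

text \<open>M is flat over A/K: for every A/K-module N and submodule N' of N, the induced map
  N' \<otimes> M \<rightarrow> N \<otimes> M is injective.  (Tensor products over A/K of A/K-modules coincide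
  with tensor products over A.)  The test modules N range over modules whose carrier lives in
  the type 'n; in the theorem 'n is an arbitrary (universally quantified) type.\<close>
definition flat_over :: "'n itself \<Rightarrow> 'r::comm_ring_1 set \<Rightarrow> ('r, 'm) amod \<Rightarrow> bool" where
  "flat_over _ K M \<longleftrightarrow>
     (\<forall>(N::('r, 'n) amod) S. is_amod N \<and> annihilated K N \<and> is_submod S N \<longrightarrow>
        (\<forall>t. Poly_Mapping.keys t \<subseteq> S \<times> mcarrier M \<longrightarrow> t \<in> tensor_rel N M \<longrightarrow>
             t \<in> tensor_rel (N\<lparr>mcarrier := S\<rparr>) M))"

definition faithfully_flat_over :: "'n itself \<Rightarrow> 'r::comm_ring_1 set \<Rightarrow> ('r, 'm) amod \<Rightarrow> bool" where
  "faithfully_flat_over T K M \<longleftrightarrow> is_amod M \<and> annihilated K M \<and> flat_over T K M \<and>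
     (\<forall>N::('r, 'n) amod. is_amod N \<and> annihilated K N \<and>
        (\<forall>t. Poly_Mapping.keys t \<subseteq> mcarrier N \<times> mcarrier M \<longrightarrow> t \<in> tensor_rel N M) \<longrightarrow>
        mcarrier N = {mzero N})"

definition pcoset :: "'p::comm_ring_1 set \<Rightarrow> 'p \<Rightarrow> 'p set" where
  "pcoset I f = {f + i | i. i \<in> I}"

definition quot_amod :: "(('v \<Rightarrow>\<^sub>0 nat) \<Rightarrow>\<^sub>0 'a::comm_ring_1) set \<Rightarrow> ('a, (('v \<Rightarrow>\<^sub>0 nat) \<Rightarrow>\<^sub>0 'a) set) amod" where
  "quot_amod I = \<lparr> mcarrier = range (pcoset I),
      madd = (\<lambda>X Y. {x + y | x y. x \<in> X \<and> y \<in> Y}),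
      mzero = I,
      msmult = (\<lambda>a X. {Poly_Mapping.single 0 a * x + i | x i. x \<in> X \<and> i \<in> I}) \<rparr>"

end

(*
  Write K = I \<inter> A and J_E = in(I)_E, an ideal containing K.  The local hypothesis says that
  J_E/K becomes 0 or 1 at every prime, hence J_E \<subseteq> J_E^2 + K; as J_E is finitely generated,
  a Nakayama argument gives e_E \<in> J_E with (1 - e_E) J_E \<subseteq> K, i.e. modulo K the ideal J_E is
  generated by an idempotent.  Reducing by leading terms of I, every class of M = A[x]/I has a
  representative whose x^E-coefficient lies in (1 - e_E) A, and these coefficients are unique
  modulo K.  Thus M is the direct sum of the modules (1 - e_E) (A/K) = (A/K)/(J_E/K), each a
  direct summand of A/K, and the summand for E = 0 is A/K itself since J_0 = K.  Concretely, the
  coefficient functionals c_E are A-linear modulo K, so n \<otimes> m \<mapsto> (c_E(m) n)_E is well defined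
  on N \<otimes> M and inverts m = \<Sum> c_E(m) x^E; this gives flatness, and the component E = 0 gives
  faithfulness.
*)

theory Submission
  imports Defs "HOL-Library.Set_Algebras" "HOL-Algebra.FiniteProduct" Complex_Main
begin

section \<open>Ideals of a commutative ring\<close>

lemma is_ideal_zero: "is_ideal J \<Longrightarrow> 0 \<in> J"
  unfolding is_ideal_def by auto

lemma is_ideal_add: "is_ideal J \<Longrightarrow> x \<in> J \<Longrightarrow> y \<in> J \<Longrightarrow> x + y \<in> J"
  unfolding is_ideal_def by auto

lemma is_ideal_mult_left: "is_ideal J \<Longrightarrow> x \<in> J \<Longrightarrow> r * x \<in> J"
  unfolding is_ideal_def by auto

lemma is_ideal_mult_right: "is_ideal J \<Longrightarrow> x \<in> J \<Longrightarrow> x * r \<in> J"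
  using is_ideal_mult_left[of J x r] by (simp add: mult.commute)

lemma is_ideal_uminus: "is_ideal J \<Longrightarrow> x \<in> J \<Longrightarrow> - x \<in> J"
  using is_ideal_mult_left[of J x "- 1"] by simp

lemma is_ideal_diff: "is_ideal J \<Longrightarrow> x \<in> J \<Longrightarrow> y \<in> J \<Longrightarrow> x - y \<in> J"
  using is_ideal_add[of J x "- y"] is_ideal_uminus[of J y] by simp

lemma is_ideal_UNIV: "is_ideal UNIV"
  unfolding is_ideal_def by auto

lemma is_ideal_sum: "is_ideal J \<Longrightarrow> (\<And>i. i \<in> D \<Longrightarrow> f i \<in> J) \<Longrightarrow> sum f D \<in> J"
  by (induction D rule: infinite_finite_induct) (auto simp: is_ideal_zero is_ideal_add)

lemma is_ideal_colon: "is_ideal W \<Longrightarrow> is_ideal {y. c * y \<in> W}"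
  unfolding is_ideal_def by (auto simp: distrib_left mult.left_commute)

lemma is_ideal_multiples_plus:
  assumes J: "is_ideal J" and L: "is_ideal L"
  shows "is_ideal {j * g + l | j l. j \<in> J \<and> l \<in> L}"
  unfolding is_ideal_def
proof (intro conjI ballI allI)
  show "0 \<in> {j * g + l | j l. j \<in> J \<and> l \<in> L}"
    using is_ideal_zero[OF J] is_ideal_zero[OF L] by force
next
  fix x y assume "x \<in> {j * g + l | j l. j \<in> J \<and> l \<in> L}" "y \<in> {j * g + l | j l. j \<in> J \<and> l \<in> L}"
  then obtain j1 l1 j2 l2 where "x = j1 * g + l1" "y = j2 * g + l2" "j1 \<in> J" "l1 \<in> L" "j2 \<in> J" "l2 \<in> L"
    by blast
  moreover from this have "x + y = (j1 + j2) * g + (l1 + l2)" by (simp add: algebra_simps)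
  ultimately show "x + y \<in> {j * g + l | j l. j \<in> J \<and> l \<in> L}"
    using is_ideal_add[OF J] is_ideal_add[OF L] by blast
next
  fix r x assume "x \<in> {j * g + l | j l. j \<in> J \<and> l \<in> L}"
  then obtain j l where "x = j * g + l" "j \<in> J" "l \<in> L" by blast
  moreover from this have "r * x = (r * j) * g + r * l" by (simp add: algebra_simps)
  ultimately show "r * x \<in> {j * g + l | j l. j \<in> J \<and> l \<in> L}"
    using is_ideal_mult_left[OF J] is_ideal_mult_left[OF L] by blast
qed

lemma multiples_plus_superset:
  fixes J L :: "'a::comm_ring_1 set"
  assumes "0 \<in> J"
  shows "L \<subseteq> {j * g + l | j l. j \<in> J \<and> l \<in> L}"
proof
  fix l assume "l \<in> L"
  moreover have "l = 0 * g + l" by simp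
  ultimately show "l \<in> {j * g + l | j l. j \<in> J \<and> l \<in> L}" using assms by blast
qed

lemma multiples_plus_mem:
  fixes J L :: "'a::comm_ring_1 set"
  assumes "j \<in> J" "0 \<in> L"
  shows "j * g \<in> {j * g + l | j l. j \<in> J \<and> l \<in> L}"
proof -
  have "j * g = j * g + 0" by simp
  then show ?thesis using assms by blast
qed

lemma gen_ideal_is_ideal: "is_ideal (gen_ideal S)"
  unfolding gen_ideal_def is_ideal_def by auto

lemma gen_ideal_superset: "S \<subseteq> gen_ideal S"
  unfolding gen_ideal_def by auto

lemma gen_ideal_least: "is_ideal J \<Longrightarrow> S \<subseteq> J \<Longrightarrow> gen_ideal S \<subseteq> J"
  unfolding gen_ideal_def by auto

lemma prime_ideal_one: "prime_ideal p \<Longrightarrow> 1 \<notin> p"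
  unfolding prime_ideal_def using is_ideal_mult_right[of p 1] by auto

lemma maximal_ideal_prime:
  fixes M :: "'a::comm_ring_1 set"
  assumes M: "is_ideal M" "1 \<notin> M"
    and maximal: "\<And>X. is_ideal X \<Longrightarrow> M \<subseteq> X \<Longrightarrow> 1 \<notin> X \<Longrightarrow> X = M"
  shows "prime_ideal M"
  unfolding prime_ideal_def
proof (intro conjI allI impI)
  show "M \<noteq> UNIV" using M(2) by auto
next
  fix a b assume ab: "a * b \<in> M"
  show "a \<in> M \<or> b \<in> M"
  proof (rule ccontr)
    assume not_in: "\<not> (a \<in> M \<or> b \<in> M)"
    define M' where "M' = {r * a + m | r m. r \<in> UNIV \<and> m \<in> M}"
    have "is_ideal M'" "M \<subseteq> M'"
      unfolding M'_def using is_ideal_multiples_plus[OF is_ideal_UNIV M(1)]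
        multiples_plus_superset[of UNIV M a] by auto
    moreover have "a \<in> M'"
      unfolding M'_def using multiples_plus_mem[of 1 UNIV M a] is_ideal_zero[OF M(1)] by simp
    ultimately have "1 \<in> M'" using maximal[of M'] not_in by blast
    then obtain r m where "1 = r * a + m" "m \<in> M" unfolding M'_def by blast
    then have "b = b * (r * a + m)" by simp
    also have "\<dots> = r * (a * b) + b * m" by (simp add: algebra_simps)
    finally have "b \<in> M"
      using is_ideal_add[OF M(1) is_ideal_mult_left[OF M(1) ab, of r] is_ideal_mult_left[OF M(1) \<open>m \<in> M\<close>, of b]]
      by simp
    then show False using not_in by blast
  qed
qed (use M(1) in \<open>auto simp: is_ideal_def\<close>)

lemma is_ideal_Union_chain:
  assumes "C \<noteq> {}" "\<And>X. X \<in> C \<Longrightarrow> is_ideal X" "\<And>X Y. X \<in> C \<Longrightarrow> Y \<in> C \<Longrightarrow> X \<subseteq> Y \<or> Y \<subseteq> X"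
  shows "is_ideal (\<Union>C)"
  unfolding is_ideal_def
proof (intro conjI ballI allI)
  show "0 \<in> \<Union>C" using assms(1,2) is_ideal_zero by blast
next
  fix x y assume "x \<in> \<Union>C" "y \<in> \<Union>C"
  then obtain X Y where XY: "X \<in> C" "Y \<in> C" "x \<in> X" "y \<in> Y" by auto
  from assms(3)[OF XY(1,2)] consider "X \<subseteq> Y" | "Y \<subseteq> X" by blast
  then show "x + y \<in> \<Union>C"
  proof cases
    case 1
    then show ?thesis using is_ideal_add[OF assms(2)[OF XY(2)]] XY by blast
  next
    case 2
    then show ?thesis using is_ideal_add[OF assms(2)[OF XY(1)]] XY by blast
  qed
next
  fix r x assume "x \<in> \<Union>C"
  then show "r * x \<in> \<Union>C" using assms(2) is_ideal_mult_left by blast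
qed

lemma exists_prime_ideal_superset:
  fixes Q :: "'a::comm_ring_1 set"
  assumes Q: "is_ideal Q" "1 \<notin> Q"
  shows "\<exists>p. prime_ideal p \<and> Q \<subseteq> p"
proof -
  define \<A> where "\<A> = {P::'a set. is_ideal P \<and> Q \<subseteq> P \<and> 1 \<notin> P}"
  have "\<exists>M\<in>\<A>. \<forall>X\<in>\<A>. M \<subseteq> X \<longrightarrow> X = M"
  proof (rule Zorn_Lemma2, intro ballI)
    fix C assume C: "C \<in> chains \<A>"
    show "\<exists>U\<in>\<A>. \<forall>X\<in>C. X \<subseteq> U"
    proof (cases "C = {}")
      case False
      have sub: "C \<subseteq> \<A>" and chain: "\<And>X Y. X \<in> C \<Longrightarrow> Y \<in> C \<Longrightarrow> X \<subseteq> Y \<or> Y \<subseteq> X"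
        using C by (auto simp: chains_def chain_subset_def)
      have "is_ideal (\<Union>C)"
        using sub by (intro is_ideal_Union_chain[OF False _ chain]) (auto simp: \<A>_def)
      moreover have "Q \<subseteq> \<Union>C" "1 \<notin> \<Union>C" using False sub by (auto simp: \<A>_def)
      ultimately show ?thesis unfolding \<A>_def by blast
    qed (use Q in \<open>auto simp: \<A>_def\<close>)
  qed
  then obtain M where "M \<in> \<A>" "\<And>X. X \<in> \<A> \<Longrightarrow> M \<subseteq> X \<Longrightarrow> X = M" by blast
  then have "prime_ideal M" "Q \<subseteq> M"
    by (auto simp: \<A>_def intro!: maximal_ideal_prime)
  then show ?thesis by blast
qed

section \<open>Idempotent generators from local triviality\<close>

lemma nakayama_step_mem:
  fixes J L :: "'a::comm_ring_1 set"
  assumes J: "is_ideal J" and L: "is_ideal L"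
    and gen: "insert g G \<subseteq> gen_ideal (J * insert g G \<union> L)"
    and a': "\<And>h. h \<in> G \<Longrightarrow> a' * h \<in> {r * g + l | r l. r \<in> UNIV \<and> l \<in> L}"
  shows "a' * g \<in> {j * g + l | j l. j \<in> J \<and> l \<in> L}"
proof -
  define W where "W = {j * g + l | j l. j \<in> J \<and> l \<in> L}"
  have W: "is_ideal W" "L \<subseteq> W" "\<And>j. j \<in> J \<Longrightarrow> j * g \<in> W"
    unfolding W_def using is_ideal_multiples_plus[OF J L]
      multiples_plus_superset[OF is_ideal_zero[OF J]] multiples_plus_mem[OF _ is_ideal_zero[OF L]]
    by auto
  have "a' * (j * h) \<in> W" if jh: "j \<in> J" "h \<in> insert g G" for j h
  proof (cases "h = g")
    case True
    then show ?thesis using W(3)[OF is_ideal_mult_left[OF J \<open>j \<in> J\<close>, of a']] by (simp add: mult.assoc)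
  next
    case False
    then obtain r l where rl: "a' * h = r * g + l" "l \<in> L"
      using a' jh(2) by blast
    have "a' * (j * h) = j * (a' * h)" by (simp add: ac_simps)
    also have "\<dots> = (j * r) * g + j * l" unfolding rl(1) by (simp add: algebra_simps)
    finally show ?thesis
      unfolding W_def using is_ideal_mult_right[OF J \<open>j \<in> J\<close>, of r] is_ideal_mult_left[OF L rl(2), of j]
      by blast
  qed
  moreover have "a' * l \<in> W" if "l \<in> L" for l
    using W(2) is_ideal_mult_left[OF L that] by blast
  ultimately have "J * insert g G \<union> L \<subseteq> {y. a' * y \<in> W}"
    by (auto elim!: set_times_elim)
  then have "gen_ideal (J * insert g G \<union> L) \<subseteq> {y. a' * y \<in> W}"
    by (rule gen_ideal_least[OF is_ideal_colon[OF W(1)]])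
  then show ?thesis using gen unfolding W_def by blast
qed

text \<open>If \<open>a' \<equiv> 1 (mod J)\<close> kills \<open>G\<close> modulo \<open>L + (g)\<close>, then \<open>a' g \<in> J g + L\<close>, say
  \<open>(a' - j\<^sub>0) g \<in> L\<close>, and \<open>a = (a' - j\<^sub>0) a'\<close> kills \<open>insert g G\<close> modulo \<open>L\<close>.\<close>
lemma nakayama_step:
  fixes J L :: "'a::comm_ring_1 set"
  assumes J: "is_ideal J" and L: "is_ideal L"
    and gen: "insert g G \<subseteq> gen_ideal (J * insert g G \<union> L)"
    and a': "a' - 1 \<in> J" "\<And>h. h \<in> G \<Longrightarrow> a' * h \<in> {r * g + l | r l. r \<in> UNIV \<and> l \<in> L}"
  shows "\<exists>a. a - 1 \<in> J \<and> (\<forall>h\<in>insert g G. a * h \<in> L)"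
proof -
  obtain j0 l0 where "j0 \<in> J" "l0 \<in> L" "a' * g = j0 * g + l0"
    using nakayama_step_mem[OF J L gen a'(2)] by blast
  then have j0: "j0 \<in> J" "l0 \<in> L" "(a' - j0) * g = l0" by (simp_all add: algebra_simps)
  define a where "a = (a' - j0) * a'"
  have "a - 1 = (a' - 1) * (a' + 1) - j0 * a'" unfolding a_def by (simp add: algebra_simps)
  then have "a - 1 \<in> J"
    using is_ideal_diff[OF J is_ideal_mult_right[OF J a'(1)] is_ideal_mult_right[OF J j0(1)]] by simp
  moreover have "a * g = a' * l0"
    unfolding a_def j0(3)[symmetric] by (simp add: ac_simps)
  then have "a * g \<in> L" using is_ideal_mult_left[OF L j0(2)] by simp
  moreover have "a * h \<in> L" if "h \<in> G" for h
  proof -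
    obtain r l where rl: "a' * h = r * g + l" "l \<in> L" using a'(2) \<open>h \<in> G\<close> by blast
    have "a * h = (a' - j0) * (a' * h)" unfolding a_def by (simp add: ac_simps)
    also have "\<dots> = r * ((a' - j0) * g) + (a' - j0) * l" unfolding rl(1) by (simp add: algebra_simps)
    finally have "a * h = r * l0 + (a' - j0) * l" unfolding j0(3) .
    then show ?thesis
      using is_ideal_add[OF L is_ideal_mult_left[OF L j0(2)] is_ideal_mult_left[OF L \<open>l \<in> L\<close>]] by simp
  qed
  ultimately show ?thesis by (intro exI[of _ a]) auto
qed

lemma nakayama_generators:
  fixes J L :: "'a::comm_ring_1 set"
  assumes J: "is_ideal J" and "is_ideal L" "finite G" "G \<subseteq> gen_ideal (J * G \<union> L)"
  shows "\<exists>a. a - 1 \<in> J \<and> (\<forall>g\<in>G. a * g \<in> L)"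
  using assms(3,2,4)
proof (induction G arbitrary: L rule: finite_induct)
  case empty
  then show ?case using is_ideal_zero[OF J] by (intro exI[of _ 1]) auto
next
  case (insert g G L)
  define L' where "L' = {r * g + l | r l. r \<in> UNIV \<and> l \<in> L}"
  have L': "is_ideal L'" "L \<subseteq> L'" "\<And>r. r * g \<in> L'"
    unfolding L'_def using is_ideal_multiples_plus[OF is_ideal_UNIV insert.prems(1)]
      multiples_plus_superset[of UNIV L g] multiples_plus_mem[OF UNIV_I is_ideal_zero[OF insert.prems(1)]]
    by auto
  have "J * insert g G \<subseteq> J * G \<union> L'"
    using L'(3) by (auto simp: set_times_def)
  then have "J * insert g G \<union> L \<subseteq> gen_ideal (J * G \<union> L')"
    using L'(2) gen_ideal_superset[of "J * G \<union> L'"] by blast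
  then have "gen_ideal (J * insert g G \<union> L) \<subseteq> gen_ideal (J * G \<union> L')"
    by (rule gen_ideal_least[OF gen_ideal_is_ideal])
  then have "G \<subseteq> gen_ideal (J * G \<union> L')"
    using insert.prems(2) by blast
  from insert.IH[OF L'(1) this] obtain a' where "a' - 1 \<in> J" "\<forall>h\<in>G. a' * h \<in> L'"
    by blast
  then show ?case
    using nakayama_step[OF J insert.prems(1,2)] unfolding L'_def by blast
qed

lemma idempotent_generator_of_le_square:
  fixes J K :: "'a::comm_ring_1 set"
  assumes J: "is_ideal J" and K: "is_ideal K" and "finite F" "J = gen_ideal F"
    and square: "J \<subseteq> gen_ideal (J * J \<union> K)"
  shows "\<exists>e\<in>J. \<forall>x\<in>J. (1 - e) * x \<in> K"
proof -
  define W where "W = gen_ideal (J * F \<union> K)"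
  have W: "is_ideal W" "K \<subseteq> W"
    unfolding W_def using gen_ideal_is_ideal gen_ideal_superset[of "J * F \<union> K"] by auto
  have "a * b \<in> W" if "a \<in> J" "b \<in> J" for a b
  proof -
    have "F \<subseteq> {y. a * y \<in> W}"
      using that gen_ideal_superset[of "J * F \<union> K"] unfolding W_def by (auto simp: set_times_def)
    then have "J \<subseteq> {y. a * y \<in> W}"
      unfolding \<open>J = gen_ideal F\<close> by (rule gen_ideal_least[OF is_ideal_colon[OF W(1)]])
    then show ?thesis using that by blast
  qed
  then have "J * J \<union> K \<subseteq> W" using W(2) by (auto simp: set_times_def)
  then have "F \<subseteq> gen_ideal (J * F \<union> K)"
    using square gen_ideal_least[OF W(1)] gen_ideal_superset[of F] \<open>J = gen_ideal F\<close>
    unfolding W_def by blast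
  from nakayama_generators[OF J K \<open>finite F\<close> this]
  obtain a where a: "a - 1 \<in> J" "\<forall>g\<in>F. a * g \<in> K" by blast
  have "J \<subseteq> {y. a * y \<in> K}"
    unfolding \<open>J = gen_ideal F\<close> using a(2) by (intro gen_ideal_least[OF is_ideal_colon[OF K]]) auto
  moreover have "1 - a \<in> J" using is_ideal_uminus[OF J a(1)] by simp
  ultimately show ?thesis by (intro bexI[of _ "1 - a"]) auto
qed

lemma ext_ideal_fst_snd:
  assumes "is_ideal J" "prime_ideal p" "x \<in> ext_ideal p J"
  shows "fst x \<in> J" "snd x \<notin> p"
proof -
  have "fst x \<in> J \<and> snd x \<notin> p"
    using assms(3)
  proof (induction rule: ext_ideal.induct)
    case ext_zero
    then show ?case using is_ideal_zero[OF assms(1)] prime_ideal_one[OF assms(2)] by simp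
  next
    case (ext_step x c b)
    then have "fst x * snd b + fst b * c * snd x \<in> J"
      using is_ideal_add[OF assms(1) is_ideal_mult_right[OF assms(1)]
          is_ideal_mult_right[OF assms(1) is_ideal_mult_left[OF assms(1)]]]
      by blast
    moreover have "snd x * snd b \<notin> p" using ext_step assms(2) unfolding prime_ideal_def by auto
    ultimately show ?case unfolding frac_add_def frac_mult_def by simp
  qed
  then show "fst x \<in> J" "snd x \<notin> p" by auto
qed

lemma locally_zero_or_unit_witness:
  fixes J K :: "'a::comm_ring_1 set"
  assumes J: "is_ideal J" and "K \<subseteq> J" and p: "prime_ideal p" and x: "x \<in> J"
    and "ext_is_zero p K J \<or> ext_is_unit p K J"
  shows "\<exists>u. u \<notin> p \<and> (u * x \<in> K \<or> u \<in> J)"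
  using assms(5)
proof
  assume zero: "ext_is_zero p K J"
  have "frac_add (0, 1) (frac_mult (1, 1) (x, 1)) \<in> ext_ideal p J"
    using x prime_ideal_one[OF p] by (intro ext_step ext_zero) auto
  then have "(x, 1) \<in> ext_ideal p J" by (simp add: frac_add_def frac_mult_def)
  with zero have "loc_eq p K (x, 1) (0, 1)" unfolding ext_is_zero_def by blast
  then show ?thesis unfolding loc_eq_def by auto
next
  assume "ext_is_unit p K J"
  then obtain y u where y: "y \<in> ext_ideal p J" "u \<notin> p" "u * (fst y - snd y) \<in> K"
    unfolding ext_is_unit_def loc_eq_def by auto
  have "fst y \<in> J" "snd y \<notin> p" using ext_ideal_fst_snd[OF J p y(1)] by auto
  have "u * snd y = u * fst y - u * (fst y - snd y)" by (simp add: algebra_simps)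
  then have "u * snd y \<in> J"
    using is_ideal_diff[OF J is_ideal_mult_left[OF J \<open>fst y \<in> J\<close>] subsetD[OF \<open>K \<subseteq> J\<close> y(3)]]
    by simp
  moreover have "u * snd y \<notin> p" using p y(2) \<open>snd y \<notin> p\<close> unfolding prime_ideal_def by auto
  ultimately show ?thesis by blast
qed

text \<open>If \<open>x \<in> J\<close> were not in \<open>J\<^sup>2 + K\<close>, the ideal of all \<open>u\<close> with \<open>u x \<in> J\<^sup>2 + K\<close> would lie
  in a prime \<open>p\<close>, contradicting the witness above.\<close>
lemma le_square_of_locally_zero_or_unit:
  fixes J K :: "'a::comm_ring_1 set"
  assumes J: "is_ideal J" and K: "is_ideal K" and "K \<subseteq> J"
    and local: "\<And>p. prime_ideal p \<Longrightarrow> ext_is_zero p K J \<or> ext_is_unit p K J"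
  shows "J \<subseteq> gen_ideal (J * J \<union> K)"
proof
  fix x assume x: "x \<in> J"
  define W where "W = gen_ideal (J * J \<union> K)"
  have W: "is_ideal W" "K \<subseteq> W" "\<And>a b. a \<in> J \<Longrightarrow> b \<in> J \<Longrightarrow> a * b \<in> W"
    unfolding W_def using gen_ideal_is_ideal gen_ideal_superset[of "J * J \<union> K"] by auto
  define Q where "Q = {u. x * u \<in> W}"
  have Q: "is_ideal Q" unfolding Q_def by (rule is_ideal_colon[OF W(1)])
  show "x \<in> W"
  proof (rule ccontr)
    assume "x \<notin> W"
    then have "1 \<notin> Q" unfolding Q_def by auto
    from exists_prime_ideal_superset[OF Q this]
    obtain p where p: "prime_ideal p" "Q \<subseteq> p" by blast
    from locally_zero_or_unit_witness[OF J \<open>K \<subseteq> J\<close> p(1) x local[OF p(1)]]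
    obtain u where "u \<notin> p" "u * x \<in> K \<or> u \<in> J" by blast
    then have "u \<in> Q" unfolding Q_def using W(2) W(3)[OF x] by (auto simp: mult.commute)
    then show False using p(2) \<open>u \<notin> p\<close> by blast
  qed
qed

lemma idempotent_generator_of_locally_zero_or_unit:
  fixes J K :: "'a::comm_ring_1 set"
  assumes "noetherian TYPE('a)" "is_ideal J" "is_ideal K" "K \<subseteq> J"
    and "\<And>p. prime_ideal p \<Longrightarrow> ext_is_zero p K J \<or> ext_is_unit p K J"
  shows "\<exists>e\<in>J. \<forall>x\<in>J. (1 - e) * x \<in> K"
proof -
  obtain F where "finite F" "J = gen_ideal F"
    using assms(1,2) unfolding noetherian_def by blast
  then show ?thesis
    using idempotent_generator_of_le_square le_square_of_locally_zero_or_unit assms(2-5) by blast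
qed

section \<open>Polynomials and monomial orders\<close>

lemma poly_mapping_sum_single: "(\<Sum>E\<in>Poly_Mapping.keys g. Poly_Mapping.single E (Poly_Mapping.lookup g E)) = g"
proof (rule poly_mapping_eqI)
  fix k
  have "Poly_Mapping.lookup (\<Sum>E\<in>Poly_Mapping.keys g. Poly_Mapping.single E (Poly_Mapping.lookup g E)) k
      = (\<Sum>E\<in>Poly_Mapping.keys g. Poly_Mapping.lookup g E when E = k)"
    by (simp add: lookup_sum lookup_single)
  also have "\<dots> = Poly_Mapping.lookup g k"
    by (cases "k \<in> Poly_Mapping.keys g") (auto simp: when_def in_keys_iff intro!: sum.neutral)
  finally show "Poly_Mapping.lookup (\<Sum>E\<in>Poly_Mapping.keys g. Poly_Mapping.single E (Poly_Mapping.lookup g E)) k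
      = Poly_Mapping.lookup g k" .
qed

lemma poly_mapping_sum_single_superset:
  assumes "finite D" "Poly_Mapping.keys g \<subseteq> D"
  shows "(\<Sum>E\<in>D. Poly_Mapping.single E (Poly_Mapping.lookup g E)) = g"
proof -
  have "(\<Sum>E\<in>D. Poly_Mapping.single E (Poly_Mapping.lookup g E))
      = (\<Sum>E\<in>Poly_Mapping.keys g. Poly_Mapping.single E (Poly_Mapping.lookup g E))"
    by (rule sum.mono_neutral_right) (use assms in \<open>auto simp: in_keys_iff\<close>)
  then show ?thesis by (simp add: poly_mapping_sum_single)
qed

lemma lookup_single_mult_add:
  fixes g :: "'k::cancel_comm_monoid_add \<Rightarrow>\<^sub>0 'a::comm_semiring_1"
  shows "Poly_Mapping.lookup (Poly_Mapping.single F c * g) (F + E) = c * Poly_Mapping.lookup g E"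
proof -
  have "Poly_Mapping.single F c * g
      = (\<Sum>E'\<in>Poly_Mapping.keys g. Poly_Mapping.single (F + E') (c * Poly_Mapping.lookup g E'))"
    by (subst (1) poly_mapping_sum_single[of g, symmetric]) (simp add: sum_distrib_left mult_single)
  then have "Poly_Mapping.lookup (Poly_Mapping.single F c * g) (F + E)
      = (\<Sum>E'\<in>Poly_Mapping.keys g. c * Poly_Mapping.lookup g E' when E' = E)"
    by (simp add: lookup_sum lookup_single)
  also have "\<dots> = c * Poly_Mapping.lookup g E"
    by (cases "E \<in> Poly_Mapping.keys g") (auto simp: when_def in_keys_iff intro!: sum.neutral)
  finally show ?thesis .
qed

lemma lookup_const_mult:
  fixes g :: "'k::cancel_comm_monoid_add \<Rightarrow>\<^sub>0 'a::comm_semiring_1"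
  shows "Poly_Mapping.lookup (Poly_Mapping.single 0 c * g) E = c * Poly_Mapping.lookup g E"
  using lookup_single_mult_add[of 0 c g E] by simp

lemma keys_single_mult:
  "Poly_Mapping.keys (Poly_Mapping.single F c * g) \<subseteq> (\<lambda>E. F + E) ` Poly_Mapping.keys g"
  using keys_mult[of "Poly_Mapping.single F c" g] by (auto split: if_splits)

lemma monomial_order_irrefl: "monomial_order ord \<Longrightarrow> \<not> ord E E"
  unfolding monomial_order_def by blast

lemma monomial_order_trans: "monomial_order ord \<Longrightarrow> ord E F \<Longrightarrow> ord F G \<Longrightarrow> ord E G"
  unfolding monomial_order_def by blast

lemma monomial_order_total: "monomial_order ord \<Longrightarrow> E \<noteq> F \<Longrightarrow> ord E F \<or> ord F E"
  unfolding monomial_order_def by blast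

lemma monomial_order_add_left: "monomial_order ord \<Longrightarrow> ord F E \<Longrightarrow> ord (G + F) (G + E)"
  unfolding monomial_order_def by blast

lemma monomial_order_zero_less_add:
  assumes mo: "monomial_order ord" and "ord 0 F" "ord 0 G"
  shows "ord 0 (F + G)"
  using monomial_order_add_left[OF mo \<open>ord 0 F\<close>, of G] monomial_order_trans[OF mo \<open>ord 0 G\<close>]
  by (simp add: add.commute)

lemma monomial_order_zero_less_single:
  assumes mo: "monomial_order ord" and "n \<noteq> 0"
  shows "ord 0 (Poly_Mapping.single v n)"
  using \<open>n \<noteq> 0\<close>
proof (induction n)
  case (Suc n)
  have one: "ord 0 (Poly_Mapping.single v 1)" using mo unfolding monomial_order_def by blast
  show ?case
  proof (cases "n = 0")
    case False
    then show ?thesis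
      using monomial_order_zero_less_add[OF mo Suc.IH one] by (simp add: single_add[symmetric])
  qed (use one in simp)
qed simp

lemma monomial_order_zero_less:
  assumes mo: "monomial_order ord" and "D \<noteq> 0"
  shows "ord 0 D"
proof -
  have "ord 0 (\<Sum>E\<in>A. Poly_Mapping.single E (Poly_Mapping.lookup D E))"
    if "finite A" "A \<noteq> {}" "A \<subseteq> Poly_Mapping.keys D" for A
    using that
  proof (induction A rule: finite_ne_induct)
    case (singleton E)
    then show ?case by (simp add: monomial_order_zero_less_single[OF mo] in_keys_iff)
  next
    case (insert E A)
    then show ?case
      by (simp add: monomial_order_zero_less_add[OF mo] monomial_order_zero_less_single[OF mo] in_keys_iff)
  qed
  from this[of "Poly_Mapping.keys D"] show ?thesis using \<open>D \<noteq> 0\<close> by (simp add: poly_mapping_sum_single)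
qed

lemma monomial_order_not_less_zero: "monomial_order ord \<Longrightarrow> \<not> ord D 0"
  using monomial_order_zero_less monomial_order_trans monomial_order_irrefl by metis

lemma monomial_order_le_of_pointwise_le:
  assumes mo: "monomial_order ord" and le: "\<And>v. Poly_Mapping.lookup F v \<le> Poly_Mapping.lookup G v"
  shows "F = G \<or> ord F G"
proof -
  have G: "G = F + (G - F)"
    by (rule poly_mapping_eqI) (use le in \<open>simp add: lookup_add lookup_minus\<close>)
  show ?thesis
  proof (cases "G - F = 0")
    case False
    then show ?thesis
      using monomial_order_add_left[OF mo monomial_order_zero_less[OF mo False], of F] G by simp
  qed (use G in simp)
qed

lemma monomial_order_finite_max:
  assumes mo: "monomial_order ord" and "finite X" "X \<noteq> {}"
  shows "\<exists>M\<in>X. \<forall>F\<in>X. F = M \<or> ord F M"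
  using assms(2,3)
proof (induction X rule: finite_ne_induct)
  case (insert x X)
  then obtain M where M: "M \<in> X" "\<forall>F\<in>X. F = M \<or> ord F M" by blast
  show ?case
  proof (cases "ord x M")
    case False
    then have "x = M \<or> ord M x" using monomial_order_total[OF mo] by blast
    then show ?thesis using M monomial_order_trans[OF mo] by (intro bexI[of _ x]) auto
  qed (use M in auto)
qed simp

lemma nat_seq_incseq_subseq:
  fixes a :: "nat \<Rightarrow> nat"
  shows "\<exists>r. strict_mono r \<and> incseq (a \<circ> r)"
proof -
  obtain r where r: "strict_mono r" "monoseq (a \<circ> r)"
    using seq_monosub[of a] by (auto simp: comp_def)
  show ?thesis
  proof (cases "incseq (a \<circ> r)")
    case False
    then have dec: "decseq (a \<circ> r)" using r(2) by (simp add: monoseq_iff)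
    \<comment> \<open>a decreasing sequence of naturals is eventually constant at its least value\<close>
    define m where "m = (LEAST m. m \<in> range (a \<circ> r))"
    obtain N where N: "(a \<circ> r) N = m"
      using LeastI[of "\<lambda>m. m \<in> range (a \<circ> r)" "(a \<circ> r) 0"] unfolding m_def by auto
    have "(a \<circ> r) n = m" if "n \<ge> N" for n
      using dec[unfolded decseq_def, rule_format, OF that] N Least_le[of "\<lambda>m. m \<in> range (a \<circ> r)"]
      unfolding m_def by (metis le_antisym rangeI)
    then have "incseq (a \<circ> (\<lambda>i. r (i + N)))" by (simp add: incseq_def)
    moreover have "strict_mono (\<lambda>i. r (i + N))" using r(1) by (simp add: strict_mono_def)
    ultimately show ?thesis by blast
  qed (use r in blast)
qed

lemma dickson_subseq:
  fixes s :: "nat \<Rightarrow> ('v \<Rightarrow>\<^sub>0 nat)"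
  assumes "finite V"
  shows "\<exists>r. strict_mono r \<and> (\<forall>v\<in>V. incseq (\<lambda>i. Poly_Mapping.lookup (s (r i)) v))"
  using assms
proof (induction V rule: finite_induct)
  case empty
  show ?case by (intro exI[of _ "id :: nat \<Rightarrow> nat"]) (simp add: strict_mono_def)
next
  case (insert w V)
  then obtain r where r: "strict_mono r" "\<forall>v\<in>V. incseq (\<lambda>i. Poly_Mapping.lookup (s (r i)) v)"
    by blast
  obtain q where q: "strict_mono q" "incseq ((\<lambda>i. Poly_Mapping.lookup (s (r i)) w) \<circ> q)"
    using nat_seq_incseq_subseq by blast
  have "incseq (\<lambda>i. Poly_Mapping.lookup (s (r (q i))) v)" if "v \<in> V" for v
    using r(2) that strict_mono_mono[OF q(1)] by (auto simp: incseq_def monoD)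
  then have "strict_mono (r \<circ> q) \<and> (\<forall>v\<in>insert w V. incseq (\<lambda>i. Poly_Mapping.lookup (s ((r \<circ> q) i)) v))"
    using strict_mono_o[OF r(1) q(1)] q(2) by (auto simp: comp_def)
  then show ?case by blast
qed

lemma dickson:
  fixes s :: "nat \<Rightarrow> ('v::finite \<Rightarrow>\<^sub>0 nat)"
  shows "\<exists>i j. i < j \<and> (\<forall>v. Poly_Mapping.lookup (s i) v \<le> Poly_Mapping.lookup (s j) v)"
proof -
  obtain r where "strict_mono r" "\<forall>v. incseq (\<lambda>i. Poly_Mapping.lookup (s (r i)) v)"
    using dickson_subseq[where s = s and V = UNIV] by auto
  then show ?thesis
    by (intro exI[of _ "r 0"] exI[of _ "r 1"]) (auto simp: strict_mono_def incseq_def)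
qed

lemma monomial_order_wf:
  assumes mo: "monomial_order (ord :: ('v::finite \<Rightarrow>\<^sub>0 nat) \<Rightarrow> _)"
  shows "wf {(F, E). ord F E}"
proof (rule ccontr)
  assume "\<not> wf {(F, E). ord F E}"
  then obtain s where s: "\<And>i. ord (s (Suc i)) (s i)"
    unfolding wf_iff_no_infinite_down_chain by auto
  have desc: "ord (s j) (s i)" if "i < j" for i j
    using that
  proof (induction j)
    case (Suc j)
    then show ?case using s[of j] monomial_order_trans[OF mo] less_Suc_eq by metis
  qed simp
  obtain i j where "i < j" "\<forall>v. Poly_Mapping.lookup (s i) v \<le> Poly_Mapping.lookup (s j) v"
    using dickson[of s] by blast
  then show False
    using desc monomial_order_le_of_pointwise_le[OF mo] monomial_order_irrefl[OF mo]
      monomial_order_trans[OF mo] by metis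
qed

section \<open>Leading coefficients\<close>

definition lead_coeffs ::
    "(('v \<Rightarrow>\<^sub>0 nat) \<Rightarrow> ('v \<Rightarrow>\<^sub>0 nat) \<Rightarrow> bool) \<Rightarrow> (('v \<Rightarrow>\<^sub>0 nat) \<Rightarrow>\<^sub>0 'a::comm_ring_1) set \<Rightarrow> ('v \<Rightarrow>\<^sub>0 nat) \<Rightarrow> 'a set"
  where "lead_coeffs ord I E =
    {Poly_Mapping.lookup f E | f. f \<in> I \<and> (\<forall>F\<in>Poly_Mapping.keys f. F \<noteq> E \<longrightarrow> ord F E)}"

lemma lead_coeffsI:
  "f \<in> I \<Longrightarrow> \<forall>F\<in>Poly_Mapping.keys f. F \<noteq> E \<longrightarrow> ord F E \<Longrightarrow> Poly_Mapping.lookup f E \<in> lead_coeffs ord I E"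
  unfolding lead_coeffs_def by blast

lemma lead_coeffsE:
  assumes "c \<in> lead_coeffs ord I E"
  obtains f where "f \<in> I" "c = Poly_Mapping.lookup f E" "\<forall>F\<in>Poly_Mapping.keys f. F \<noteq> E \<longrightarrow> ord F E"
  using assms unfolding lead_coeffs_def by blast

lemma lead_coeffs_zero: "is_ideal I \<Longrightarrow> 0 \<in> lead_coeffs ord I E"
  using lead_coeffsI[of 0 I E ord] is_ideal_zero[of I] by simp

lemma lead_coeffs_add:
  assumes I: "is_ideal I" and "a \<in> lead_coeffs ord I E" "b \<in> lead_coeffs ord I E"
  shows "a + b \<in> lead_coeffs ord I E"
proof -
  obtain f where f: "f \<in> I" "a = Poly_Mapping.lookup f E" "\<forall>F\<in>Poly_Mapping.keys f. F \<noteq> E \<longrightarrow> ord F E"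
    using assms(2) by (rule lead_coeffsE)
  obtain g where g: "g \<in> I" "b = Poly_Mapping.lookup g E" "\<forall>F\<in>Poly_Mapping.keys g. F \<noteq> E \<longrightarrow> ord F E"
    using assms(3) by (rule lead_coeffsE)
  have "\<forall>F\<in>Poly_Mapping.keys (f + g). F \<noteq> E \<longrightarrow> ord F E"
    using f(3) g(3) keys_add[of f g] by blast
  from lead_coeffsI[where ord = ord, OF is_ideal_add[OF I f(1) g(1)] this] show ?thesis
    by (simp add: f(2) g(2) lookup_add)
qed

lemma lead_coeffs_sum:
  "is_ideal I \<Longrightarrow> (\<And>i. i \<in> D \<Longrightarrow> h i \<in> lead_coeffs ord I E) \<Longrightarrow> sum h D \<in> lead_coeffs ord I E"
  by (induction D rule: infinite_finite_induct) (simp_all add: lead_coeffs_zero lead_coeffs_add)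

lemma lead_coeffs_shift:
  assumes mo: "monomial_order ord" and I: "is_ideal I" and "c \<in> lead_coeffs ord I E"
  shows "r * c \<in> lead_coeffs ord I (F + E)"
proof -
  obtain f where f: "f \<in> I" "c = Poly_Mapping.lookup f E" "\<forall>G\<in>Poly_Mapping.keys f. G \<noteq> E \<longrightarrow> ord G E"
    using assms(3) by (rule lead_coeffsE)
  have "ord G (F + E)" if G: "G \<in> Poly_Mapping.keys (Poly_Mapping.single F r * f)" "G \<noteq> F + E" for G
  proof -
    obtain G' where "G = F + G'" "G' \<in> Poly_Mapping.keys f" using G(1) keys_single_mult[of F r f] by blast
    moreover from this have "ord G' E" using f(3) G(2) by auto
    ultimately show ?thesis using monomial_order_add_left[OF mo] by blast
  qed
  then have "Poly_Mapping.lookup (Poly_Mapping.single F r * f) (F + E) \<in> lead_coeffs ord I (F + E)"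
    using lead_coeffsI[where ord = ord, OF is_ideal_mult_left[OF I f(1)]] by blast
  then show ?thesis by (simp add: f(2) lookup_single_mult_add)
qed

lemma lead_exp_eqI:
  assumes mo: "monomial_order ord"
    and "E \<in> Poly_Mapping.keys f" "\<forall>F\<in>Poly_Mapping.keys f. F \<noteq> E \<longrightarrow> ord F E"
  shows "lead_exp ord f = E"
  unfolding lead_exp_def
proof (rule the_equality)
  fix E' assume E': "E' \<in> Poly_Mapping.keys f \<and> (\<forall>F\<in>Poly_Mapping.keys f. F \<noteq> E' \<longrightarrow> ord F E')"
  show "E' = E"
  proof (rule ccontr)
    assume "E' \<noteq> E"
    then have "ord E' E" "ord E E'" using assms(2,3) E' by auto
    then show False using monomial_order_trans[OF mo] monomial_order_irrefl[OF mo] by blast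
  qed
qed (use assms in blast)

lemma lead_exp_greatest:
  assumes mo: "monomial_order ord" and "f \<noteq> 0"
  shows "\<forall>F\<in>Poly_Mapping.keys f. F \<noteq> lead_exp ord f \<longrightarrow> ord F (lead_exp ord f)"
proof -
  have "Poly_Mapping.keys f \<noteq> {}" using \<open>f \<noteq> 0\<close> by simp
  then obtain M where M: "M \<in> Poly_Mapping.keys f" "\<forall>F\<in>Poly_Mapping.keys f. F = M \<or> ord F M"
    using monomial_order_finite_max[OF mo finite_keys[of f]] by blast
  then have "\<forall>F\<in>Poly_Mapping.keys f. F \<noteq> M \<longrightarrow> ord F M" by blast
  with M(1) have "lead_exp ord f = M" by (rule lead_exp_eqI[OF mo])
  with M(2) show ?thesis by auto
qed

lemma lead_coeffs_single_mult:
  assumes mo: "monomial_order ord" and I: "is_ideal I"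
    and a: "\<forall>E. Poly_Mapping.lookup a E \<in> lead_coeffs ord I E"
  shows "Poly_Mapping.lookup (Poly_Mapping.single F c * a) E \<in> lead_coeffs ord I E"
proof (cases "E \<in> (\<lambda>E'. F + E') ` Poly_Mapping.keys a")
  case True
  then obtain E' where "E = F + E'" by blast
  then show ?thesis
    using lead_coeffs_shift[OF mo I, of "Poly_Mapping.lookup a E'" E' c F] a
    by (simp add: lookup_single_mult_add)
next
  case False
  then have "E \<notin> Poly_Mapping.keys (Poly_Mapping.single F c * a)"
    using keys_single_mult[of F c a] by blast
  then show ?thesis using lead_coeffs_zero[OF I] by (simp add: in_keys_iff)
qed

lemma is_ideal_lead_coeff_polys:
  assumes mo: "monomial_order ord" and I: "is_ideal I"
  shows "is_ideal {x. \<forall>E. Poly_Mapping.lookup x E \<in> lead_coeffs ord I E}"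
  unfolding is_ideal_def
proof (intro conjI ballI allI)
  fix r a assume "a \<in> {x. \<forall>E. Poly_Mapping.lookup x E \<in> lead_coeffs ord I E}"
  then have a: "\<forall>E. Poly_Mapping.lookup a E \<in> lead_coeffs ord I E" by simp
  have "r * a = (\<Sum>F\<in>Poly_Mapping.keys r. Poly_Mapping.single F (Poly_Mapping.lookup r F) * a)"
    by (subst (1) poly_mapping_sum_single[of r, symmetric]) (simp add: sum_distrib_right)
  moreover have "Poly_Mapping.lookup (\<Sum>F\<in>Poly_Mapping.keys r. Poly_Mapping.single F (Poly_Mapping.lookup r F) * a) E
      \<in> lead_coeffs ord I E" for E
    unfolding lookup_sum by (intro lead_coeffs_sum[OF I] lead_coeffs_single_mult[OF mo I a])
  ultimately show "r * a \<in> {x. \<forall>E. Poly_Mapping.lookup x E \<in> lead_coeffs ord I E}" by simp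
qed (simp_all add: lead_coeffs_zero[OF I] lead_coeffs_add[OF I] lookup_add)

lemma lookup_init_term_in_lead_coeffs:
  assumes mo: "monomial_order ord" and "f \<in> I" "f \<noteq> 0" "is_ideal I"
  shows "Poly_Mapping.lookup (init_term ord f) E \<in> lead_coeffs ord I E"
proof (cases "E = lead_exp ord f")
  case True
  then have "Poly_Mapping.lookup (init_term ord f) E = Poly_Mapping.lookup f E"
    by (simp add: init_term_def)
  moreover have "Poly_Mapping.lookup f E \<in> lead_coeffs ord I E"
    unfolding lead_coeffs_def using \<open>f \<in> I\<close> lead_exp_greatest[OF mo \<open>f \<noteq> 0\<close>] True by blast
  ultimately show ?thesis by simp
qed (simp add: init_term_def lookup_single_not_eq lead_coeffs_zero[OF \<open>is_ideal I\<close>])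

lemma lookup_init_ideal_in_lead_coeffs:
  assumes mo: "monomial_order ord" and I: "is_ideal I" and "x \<in> init_ideal ord I"
  shows "Poly_Mapping.lookup x E \<in> lead_coeffs ord I E"
proof -
  have "init_ideal ord I \<subseteq> {x. \<forall>E. Poly_Mapping.lookup x E \<in> lead_coeffs ord I E}"
    unfolding init_ideal_def
    using lookup_init_term_in_lead_coeffs[OF mo _ _ I]
    by (intro gen_ideal_least[OF is_ideal_lead_coeff_polys[OF mo I]]) auto
  then show ?thesis using \<open>x \<in> init_ideal ord I\<close> by blast
qed

lemma coeff_init_ideal_eq_lead_coeffs:
  assumes mo: "monomial_order ord" and I: "is_ideal I"
  shows "coeff_ideal (init_ideal ord I) E = lead_coeffs ord I E"
proof
  show "coeff_ideal (init_ideal ord I) E \<subseteq> lead_coeffs ord I E"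
  proof
    fix c assume "c \<in> coeff_ideal (init_ideal ord I) E"
    then have "Poly_Mapping.single E c \<in> init_ideal ord I" by (simp add: coeff_ideal_def)
    from lookup_init_ideal_in_lead_coeffs[OF mo I this, of E] show "c \<in> lead_coeffs ord I E" by simp
  qed
next
  show "lead_coeffs ord I E \<subseteq> coeff_ideal (init_ideal ord I) E"
  proof
    fix c assume "c \<in> lead_coeffs ord I E"
    then obtain f where f: "f \<in> I" "c = Poly_Mapping.lookup f E"
        "\<forall>F\<in>Poly_Mapping.keys f. F \<noteq> E \<longrightarrow> ord F E"
      by (rule lead_coeffsE)
    have "Poly_Mapping.single E c \<in> init_ideal ord I"
    proof (cases "c = 0")
      case True
      then show ?thesis unfolding init_ideal_def using is_ideal_zero[OF gen_ideal_is_ideal] by simp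
    next
      case False
      then have "E \<in> Poly_Mapping.keys f" using f(2) by (simp add: in_keys_iff)
      then have "init_term ord f = Poly_Mapping.single E c"
        using lead_exp_eqI[OF mo _ f(3)] f(2) by (simp add: init_term_def)
      moreover have "f \<noteq> 0" using \<open>E \<in> Poly_Mapping.keys f\<close> by auto
      then have "init_term ord f \<in> {init_term ord g | g. g \<in> I \<and> g \<noteq> 0}"
        unfolding mem_Collect_eq using f(1) by (intro exI[of _ f]) simp
      then have "init_term ord f \<in> init_ideal ord I"
        unfolding init_ideal_def by (rule subsetD[OF gen_ideal_superset])
      ultimately show ?thesis by simp
    qed
    then show "c \<in> coeff_ideal (init_ideal ord I) E" by (simp add: coeff_ideal_def)
  qed
qed

lemma coeff_ideal_is_ideal:
  assumes J: "is_ideal J"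
  shows "is_ideal (coeff_ideal J E)"
  unfolding is_ideal_def coeff_ideal_def
proof (intro conjI ballI allI; clarsimp)
  show "0 \<in> J" using is_ideal_zero[OF J] .
next
  fix x y assume "Poly_Mapping.single E x \<in> J" "Poly_Mapping.single E y \<in> J"
  then show "Poly_Mapping.single E (x + y) \<in> J" using is_ideal_add[OF J] by (simp add: single_add)
next
  fix r x assume "Poly_Mapping.single E x \<in> J"
  then show "Poly_Mapping.single E (r * x) \<in> J"
    using is_ideal_mult_left[OF J, of "Poly_Mapping.single E x" "Poly_Mapping.single 0 r"]
    by (simp add: mult_single)
qed

lemma contraction_is_ideal: "is_ideal I \<Longrightarrow> is_ideal (contraction I)"
  using coeff_ideal_is_ideal[of I 0] by (simp add: coeff_ideal_def contraction_def)

lemma contraction_subset_lead_coeffs: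
  assumes mo: "monomial_order ord" and I: "is_ideal I"
  shows "contraction I \<subseteq> lead_coeffs ord I E"
proof
  fix k assume "k \<in> contraction I"
  then have "Poly_Mapping.single 0 k \<in> I" unfolding contraction_def by simp
  then have "Poly_Mapping.lookup (Poly_Mapping.single 0 k) 0 \<in> lead_coeffs ord I 0"
    using lead_coeffsI[of "Poly_Mapping.single 0 k" I 0 ord] by simp
  from lead_coeffs_shift[OF mo I this, where r = 1 and F = E] show "k \<in> lead_coeffs ord I E" by simp
qed

lemma lead_coeffs_zero_exp:
  assumes mo: "monomial_order ord" and "c \<in> lead_coeffs ord I 0"
  shows "c \<in> contraction I"
proof -
  obtain f where f: "f \<in> I" "c = Poly_Mapping.lookup f 0" "\<forall>F\<in>Poly_Mapping.keys f. F \<noteq> 0 \<longrightarrow> ord F 0"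
    using assms(2) by (rule lead_coeffsE)
  then have "Poly_Mapping.keys f \<subseteq> {0}" using monomial_order_not_less_zero[OF mo] by blast
  then have "f = Poly_Mapping.single 0 c"
    by (intro poly_mapping_eqI) (auto simp: f(2) lookup_single when_def in_keys_iff)
  then show ?thesis using f(1) unfolding contraction_def by simp
qed

lemma mem_of_coeffs_in_contraction:
  assumes I: "is_ideal I" and "\<And>E. Poly_Mapping.lookup f E \<in> contraction I"
  shows "f \<in> I"
proof -
  have "Poly_Mapping.single E 1 * Poly_Mapping.single 0 (Poly_Mapping.lookup f E) \<in> I" for E
    using is_ideal_mult_left[OF I] assms(2)[of E] unfolding contraction_def by blast
  then have "(\<Sum>E\<in>Poly_Mapping.keys f. Poly_Mapping.single E (Poly_Mapping.lookup f E)) \<in> I"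
    by (intro is_ideal_sum[OF I]) (simp add: mult_single)
  then show "f \<in> I" by (simp add: poly_mapping_sum_single)
qed

section \<open>Standard representatives\<close>

text \<open>The rest of the argument only needs that each \<open>J\<^sub>E\<close> is generated by an idempotent
  modulo \<open>K\<close>; the Noetherian and local hypotheses of the theorem serve only to produce \<open>e\<close>.\<close>
locale idempotent_initial_coeffs =
  fixes ord :: "('v::finite \<Rightarrow>\<^sub>0 nat) \<Rightarrow> ('v \<Rightarrow>\<^sub>0 nat) \<Rightarrow> bool"
    and I :: "(('v \<Rightarrow>\<^sub>0 nat) \<Rightarrow>\<^sub>0 'a::comm_ring_1) set"
    and e :: "('v \<Rightarrow>\<^sub>0 nat) \<Rightarrow> 'a"
  assumes monomial_order: "monomial_order ord"
    and ideal: "is_ideal I"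
    and idem_mem: "e E \<in> coeff_ideal (init_ideal ord I) E"
    and idem_complement: "x \<in> coeff_ideal (init_ideal ord I) E \<Longrightarrow> (1 - e E) * x \<in> contraction I"
begin

abbreviation K where "K \<equiv> contraction I"

lemma K_is_ideal: "is_ideal K"
  by (rule contraction_is_ideal[OF ideal])

lemma idem_in_lead_coeffs: "e E \<in> lead_coeffs ord I E"
  using idem_mem coeff_init_ideal_eq_lead_coeffs[OF monomial_order ideal] by simp

lemma idem_complement_lead: "x \<in> lead_coeffs ord I E \<Longrightarrow> (1 - e E) * x \<in> K"
  using idem_complement coeff_init_ideal_eq_lead_coeffs[OF monomial_order ideal] by simp

lemma idem_zero_in_K: "e 0 \<in> K"
  by (rule lead_coeffs_zero_exp[OF monomial_order idem_in_lead_coeffs])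

lemma mem_K_of_mult_idem:
  assumes "d \<in> lead_coeffs ord I E" "d * e E \<in> K"
  shows "d \<in> K"
proof -
  have "d = d * e E + (1 - e E) * d" by (simp add: algebra_simps)
  then show ?thesis using is_ideal_add[OF K_is_ideal assms(2) idem_complement_lead[OF assms(1)]] by simp
qed

text \<open>Modulo \<open>K\<close>, \<open>A = J\<^sub>E \<oplus> (1 - e\<^sub>E) A\<close> with \<open>J\<^sub>E = (e\<^sub>E) + K\<close>.  A polynomial is standard when
  each coefficient of \<open>x\<^sup>E\<close> lies in the second summand, which maps isomorphically onto \<open>A/J\<^sub>E\<close>.\<close>
definition standard :: "(('v \<Rightarrow>\<^sub>0 nat) \<Rightarrow>\<^sub>0 'a) \<Rightarrow> bool"
  where "standard g \<longleftrightarrow> (\<forall>E. Poly_Mapping.lookup g E * e E \<in> K)"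

lemma standard_zero: "standard 0"
  unfolding standard_def using is_ideal_zero[OF K_is_ideal] by simp

lemma standard_add: "standard g \<Longrightarrow> standard h \<Longrightarrow> standard (g + h)"
  unfolding standard_def by (simp add: lookup_add distrib_right is_ideal_add[OF K_is_ideal])

lemma standard_diff: "standard g \<Longrightarrow> standard h \<Longrightarrow> standard (g - h)"
  unfolding standard_def by (simp add: lookup_minus left_diff_distrib is_ideal_diff[OF K_is_ideal])

lemma standard_const_mult: "standard g \<Longrightarrow> standard (Poly_Mapping.single 0 a * g)"
  unfolding standard_def by (simp add: lookup_const_mult mult.assoc is_ideal_mult_left[OF K_is_ideal])

lemma standard_one: "standard 1"
  unfolding standard_def
  using idem_zero_in_K is_ideal_zero[OF K_is_ideal] by (auto simp: lookup_one when_def)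

text \<open>Strip the coefficients lying in \<open>K\<close>; the leading one of what remains is in \<open>J\<^sub>M\<close>, and
  being annihilated by \<open>e\<^sub>M\<close> modulo \<open>K\<close> it is in \<open>K\<close> after all.\<close>
lemma standard_in_ideal_coeffs:
  assumes "standard h" "h \<in> I"
  shows "Poly_Mapping.lookup h E \<in> K"
proof (rule ccontr)
  define B where "B = {F. Poly_Mapping.lookup h F \<notin> K}"
  assume "Poly_Mapping.lookup h E \<notin> K"
  then have "B \<noteq> {}" unfolding B_def by blast
  moreover have "B \<subseteq> Poly_Mapping.keys h"
    using is_ideal_zero[OF K_is_ideal] unfolding B_def by (auto simp: in_keys_iff)
  then have "finite B" using finite_subset[OF _ finite_keys] by blast
  ultimately obtain M where M: "M \<in> B" "\<forall>F\<in>B. F = M \<or> ord F M"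
    using monomial_order_finite_max[OF monomial_order] by blast
  define h' where "h' = (\<Sum>F\<in>B. Poly_Mapping.single F (Poly_Mapping.lookup h F))"
  have lookup_h': "Poly_Mapping.lookup h' F = (if F \<in> B then Poly_Mapping.lookup h F else 0)" for F
    unfolding h'_def using \<open>finite B\<close> by (simp add: lookup_sum lookup_single when_def)
  have "h - h' \<in> I"
    by (rule mem_of_coeffs_in_contraction[OF ideal])
      (use is_ideal_zero[OF K_is_ideal] in \<open>auto simp: lookup_minus lookup_h' B_def\<close>)
  then have "h' \<in> I" using is_ideal_diff[OF ideal \<open>h \<in> I\<close> \<open>h - h' \<in> I\<close>] by simp
  moreover have "\<forall>F\<in>Poly_Mapping.keys h'. F \<noteq> M \<longrightarrow> ord F M"
    using M(2) by (auto simp: in_keys_iff lookup_h' split: if_splits)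
  ultimately have "Poly_Mapping.lookup h' M \<in> lead_coeffs ord I M"
    by (rule lead_coeffsI)
  then have "Poly_Mapping.lookup h M \<in> lead_coeffs ord I M"
    using lookup_h'[of M] M(1) by simp
  moreover have "Poly_Mapping.lookup h M * e M \<in> K" using \<open>standard h\<close> unfolding standard_def by blast
  ultimately have "Poly_Mapping.lookup h M \<in> K" by (rule mem_K_of_mult_idem)
  then show False using M(1) unfolding B_def by blast
qed

definition unreduced :: "(('v \<Rightarrow>\<^sub>0 nat) \<Rightarrow>\<^sub>0 'a) \<Rightarrow> ('v \<Rightarrow>\<^sub>0 nat) set"
  where "unreduced f = {F. Poly_Mapping.lookup f F * e F \<notin> K}"

lemma standard_iff_unreduced_empty: "standard f \<longleftrightarrow> unreduced f = {}"
  unfolding standard_def unreduced_def by blast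

lemma unreduced_empty_or_max:
  "unreduced f = {} \<or> (\<exists>M\<in>unreduced f. \<forall>F\<in>unreduced f. F = M \<or> ord F M)"
proof -
  have "unreduced f \<subseteq> Poly_Mapping.keys f"
    unfolding unreduced_def using is_ideal_zero[OF K_is_ideal] by (auto simp: in_keys_iff)
  then have "finite (unreduced f)" using finite_subset[OF _ finite_keys] by blast
  then show ?thesis using monomial_order_finite_max[OF monomial_order] by blast
qed

text \<open>One reduction step: subtracting an element of \<open>I\<close> with leading coefficient
  \<open>c e\<^sub>M\<close> at \<open>x\<^sup>M\<close> replaces the coefficient \<open>c\<close> by \<open>c (1 - e\<^sub>M)\<close>, and only touches smaller monomials.\<close>
lemma reduce_unreduced:
  assumes "\<forall>F\<in>unreduced f. F = M \<or> ord F M"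
  shows "\<exists>h\<in>I. \<forall>F\<in>unreduced (f - h). ord F M"
proof -
  define c where "c = Poly_Mapping.lookup f M"
  have "c * e M \<in> lead_coeffs ord I M"
    using lead_coeffs_shift[OF monomial_order ideal idem_in_lead_coeffs, where r = c and F = 0] by simp
  then obtain h where h: "h \<in> I" "c * e M = Poly_Mapping.lookup h M"
      "\<forall>F\<in>Poly_Mapping.keys h. F \<noteq> M \<longrightarrow> ord F M"
    by (rule lead_coeffsE)
  have "ord F M" if F: "F \<in> unreduced (f - h)" for F
  proof (cases "F = M")
    case True
    have "Poly_Mapping.lookup (f - h) M * e M = c * ((1 - e M) * e M)"
      by (simp add: lookup_minus h(2)[symmetric] c_def algebra_simps)
    moreover have "(1 - e M) * e M \<in> K" using idem_complement_lead[OF idem_in_lead_coeffs] .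
    ultimately show ?thesis
      using F True is_ideal_mult_left[OF K_is_ideal] unfolding unreduced_def by auto
  next
    case False
    show ?thesis
    proof (rule ccontr)
      assume "\<not> ord F M"
      then have "Poly_Mapping.lookup (f - h) F = Poly_Mapping.lookup f F"
        using h(3) False by (auto simp: lookup_minus in_keys_iff)
      then show False using F assms False \<open>\<not> ord F M\<close> unfolding unreduced_def by auto
    qed
  qed
  then show ?thesis using h(1) by blast
qed

lemma exists_standard_below:
  "\<forall>f. (\<forall>F\<in>unreduced f. F = M \<or> ord F M) \<longrightarrow> (\<exists>g. standard g \<and> f - g \<in> I)"
proof (induction M rule: wf_induct[OF monomial_order_wf[OF monomial_order]])
  case (1 M)
  show ?case
  proof (intro allI impI)
    fix f assume "\<forall>F\<in>unreduced f. F = M \<or> ord F M"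
    then obtain h where h: "h \<in> I" "\<forall>F\<in>unreduced (f - h). ord F M"
      using reduce_unreduced by blast
    have "\<exists>g. standard g \<and> f - h - g \<in> I"
      using unreduced_empty_or_max[of "f - h"]
    proof
      assume "unreduced (f - h) = {}"
      then show ?thesis
        using is_ideal_zero[OF ideal] standard_iff_unreduced_empty by (intro exI[of _ "f - h"]) auto
    next
      assume "\<exists>M'\<in>unreduced (f - h). \<forall>F\<in>unreduced (f - h). F = M' \<or> ord F M'"
      then obtain M' where "ord M' M" "\<forall>F\<in>unreduced (f - h). F = M' \<or> ord F M'"
        using h(2) by blast
      then show ?thesis using "1" by blast
    qed
    then obtain g where "standard g" "f - h - g \<in> I" by blast
    moreover have "f - g = (f - h - g) + h" by simp
    ultimately show "\<exists>g. standard g \<and> f - g \<in> I"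
      using is_ideal_add[OF ideal \<open>f - h - g \<in> I\<close> h(1)] by auto
  qed
qed

lemma exists_standard_representative: "\<exists>g. standard g \<and> f - g \<in> I"
  using unreduced_empty_or_max[of f]
proof
  assume "unreduced f = {}"
  then show ?thesis
    using is_ideal_zero[OF ideal] standard_iff_unreduced_empty by (intro exI[of _ f]) auto
qed (use exists_standard_below in blast)

end

section \<open>Modules and evaluation of formal sums\<close>

text \<open>The additive group of a module as a HOL-Algebra monoid, so that \<open>finprod\<close> provides
  finite sums in it.\<close>
definition amod_group :: "('r, 'm) amod \<Rightarrow> 'm monoid"
  where "amod_group N = \<lparr>carrier = mcarrier N, mult = madd N, one = mzero N\<rparr>"

lemma amod_group_simps [simp]:
  "carrier (amod_group N) = mcarrier N" "mult (amod_group N) = madd N" "one (amod_group N) = mzero N"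
  by (simp_all add: amod_group_def)

lemma is_amodD:
  assumes "is_amod N"
  shows "mzero N \<in> mcarrier N"
    and "\<forall>x\<in>mcarrier N. \<forall>y\<in>mcarrier N. madd N x y \<in> mcarrier N"
    and "\<forall>a. \<forall>x\<in>mcarrier N. msmult N a x \<in> mcarrier N"
    and "\<forall>x\<in>mcarrier N. \<forall>y\<in>mcarrier N. \<forall>z\<in>mcarrier N. madd N (madd N x y) z = madd N x (madd N y z)"
    and "\<forall>x\<in>mcarrier N. \<forall>y\<in>mcarrier N. madd N x y = madd N y x"
    and "\<forall>x\<in>mcarrier N. madd N (mzero N) x = x"
    and "\<forall>x\<in>mcarrier N. \<exists>y\<in>mcarrier N. madd N x y = mzero N"
    and "\<forall>a. \<forall>x\<in>mcarrier N. \<forall>y\<in>mcarrier N. msmult N a (madd N x y) = madd N (msmult N a x) (msmult N a y)"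
    and "\<forall>a b. \<forall>x\<in>mcarrier N. msmult N (a + b) x = madd N (msmult N a x) (msmult N b x)"
    and "\<forall>a b. \<forall>x\<in>mcarrier N. msmult N (a * b) x = msmult N a (msmult N b x)"
    and "\<forall>x\<in>mcarrier N. msmult N 1 x = x"
  by (insert assms[unfolded is_amod_def], elim conjE, assumption)+

locale amodule =
  fixes N :: "('r::comm_ring_1, 'm) amod"
  assumes amod: "is_amod N"
begin

lemma zero_closed [simp]: "mzero N \<in> mcarrier N"
  using is_amodD(1)[OF amod] .

lemma add_closed [simp]: "x \<in> mcarrier N \<Longrightarrow> y \<in> mcarrier N \<Longrightarrow> madd N x y \<in> mcarrier N"
  using is_amodD(2)[OF amod] by simp

lemma smult_closed [simp]: "x \<in> mcarrier N \<Longrightarrow> msmult N a x \<in> mcarrier N"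
  using is_amodD(3)[OF amod] by simp

lemma add_assoc:
  "x \<in> mcarrier N \<Longrightarrow> y \<in> mcarrier N \<Longrightarrow> w \<in> mcarrier N \<Longrightarrow> madd N (madd N x y) w = madd N x (madd N y w)"
  using is_amodD(4)[OF amod] by simp

lemma add_commute: "x \<in> mcarrier N \<Longrightarrow> y \<in> mcarrier N \<Longrightarrow> madd N x y = madd N y x"
  using is_amodD(5)[OF amod] by simp

lemma zero_add [simp]: "x \<in> mcarrier N \<Longrightarrow> madd N (mzero N) x = x"
  using is_amodD(6)[OF amod] by simp

lemma exists_neg: "x \<in> mcarrier N \<Longrightarrow> \<exists>y\<in>mcarrier N. madd N y x = mzero N"
  using is_amodD(7)[OF amod] add_commute by metis

lemma smult_add_right:
  "x \<in> mcarrier N \<Longrightarrow> y \<in> mcarrier N \<Longrightarrow> msmult N a (madd N x y) = madd N (msmult N a x) (msmult N a y)"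
  using is_amodD(8)[OF amod] by simp

lemma smult_add_left: "x \<in> mcarrier N \<Longrightarrow> msmult N (a + b) x = madd N (msmult N a x) (msmult N b x)"
  using is_amodD(9)[OF amod] by simp

lemma smult_smult: "x \<in> mcarrier N \<Longrightarrow> msmult N (a * b) x = msmult N a (msmult N b x)"
  using is_amodD(10)[OF amod] by simp

lemma one_smult [simp]: "x \<in> mcarrier N \<Longrightarrow> msmult N 1 x = x"
  using is_amodD(11)[OF amod] by simp

sublocale G: comm_group "amod_group N"
  by (rule comm_groupI) (auto simp: add_assoc exists_neg intro: add_commute)

abbreviation neg where "neg \<equiv> m_inv (amod_group N)"

lemmas add_zero_right [simp] = G.r_one[simplified]
lemmas neg_add [simp] = G.l_inv[simplified]
lemmas neg_closed [simp] = G.inv_closed[simplified]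

lemma smult_zero_left [simp]: "x \<in> mcarrier N \<Longrightarrow> msmult N 0 x = mzero N"
  using smult_add_left[of x 0 0] G.l_cancel_one[of "msmult N 0 x" "msmult N 0 x"] by simp

lemma smult_eq_mod_annihilator:
  assumes "annihilated K N" "x \<in> mcarrier N" "a - b \<in> K"
  shows "msmult N a x = msmult N b x"
proof -
  have "msmult N a x = madd N (msmult N b x) (msmult N (a - b) x)"
    using smult_add_left[OF assms(2), of b "a - b"] by simp
  also have "msmult N (a - b) x = mzero N" using assms unfolding annihilated_def by blast
  finally show ?thesis using assms(2) by simp
qed

end

lemma submodule_is_amod:
  assumes "is_amod N" "is_submod S N"
  shows "is_amod (N\<lparr>mcarrier := S\<rparr>)"
proof -
  interpret amodule N by (rule amodule.intro) fact
  have S: "S \<subseteq> mcarrier N" "mzero N \<in> S" "\<And>x y. x \<in> S \<Longrightarrow> y \<in> S \<Longrightarrow> madd N x y \<in> S"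
      "\<And>a x. x \<in> S \<Longrightarrow> msmult N a x \<in> S"
    using assms(2) unfolding is_submod_def by blast+
  have "madd N x (msmult N (- 1) x) = mzero N" if "x \<in> S" for x
    using smult_add_left[of x 1 "- 1"] that S(1) by auto
  then have "\<forall>x\<in>S. \<exists>y\<in>S. madd N x y = mzero N" using S(4) by blast
  moreover have in_N: "x \<in> mcarrier N" if "x \<in> S" for x using S(1) that by blast
  moreover have "\<forall>x\<in>S. \<forall>y\<in>S. \<forall>w\<in>S. madd N (madd N x y) w = madd N x (madd N y w)"
    using in_N by (simp add: add_assoc)
  moreover have "\<forall>x\<in>S. \<forall>y\<in>S. madd N x y = madd N y x"
    using in_N by (simp add: add_commute)
  moreover have "\<forall>x\<in>S. madd N (mzero N) x = x" "\<forall>x\<in>S. msmult N 1 x = x"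
    "\<forall>a. \<forall>x\<in>S. \<forall>y\<in>S. msmult N a (madd N x y) = madd N (msmult N a x) (msmult N a y)"
    "\<forall>a b. \<forall>x\<in>S. msmult N (a + b) x = madd N (msmult N a x) (msmult N b x)"
    "\<forall>a b. \<forall>x\<in>S. msmult N (a * b) x = msmult N a (msmult N b x)"
    using in_N by (simp_all add: smult_add_right smult_add_left smult_smult)
  ultimately show ?thesis using S(2-4) unfolding is_amod_def by simp
qed

definition eval_fsum :: "('r::comm_ring_1, 'm) amod \<Rightarrow> ('m \<Rightarrow>\<^sub>0 int) \<Rightarrow> 'm"
  where "eval_fsum N u =
    finprod (amod_group N) (\<lambda>y. msmult N (of_int (Poly_Mapping.lookup u y)) y) (Poly_Mapping.keys u)"

context amodule
begin

lemma eval_fsum_superset: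
  assumes "finite D" "Poly_Mapping.keys u \<subseteq> D" "D \<subseteq> mcarrier N"
  shows "eval_fsum N u = finprod (amod_group N) (\<lambda>y. msmult N (of_int (Poly_Mapping.lookup u y)) y) D"
  unfolding eval_fsum_def
  by (rule G.finprod_mono_neutral_cong_left) (use assms in \<open>auto simp: in_keys_iff\<close>)

lemma eval_fsum_closed: "Poly_Mapping.keys u \<subseteq> mcarrier N \<Longrightarrow> eval_fsum N u \<in> mcarrier N"
  unfolding eval_fsum_def by (rule G.finprod_closed[simplified]) auto

lemma eval_fsum_zero [simp]: "eval_fsum N 0 = mzero N"
  by (simp add: eval_fsum_def)

lemma eval_fsum_frag_of [simp]: "y \<in> mcarrier N \<Longrightarrow> eval_fsum N (frag_of y) = y"
  by (simp add: eval_fsum_def keys_frag_of)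

lemma eval_fsum_add:
  assumes "Poly_Mapping.keys u \<subseteq> mcarrier N" "Poly_Mapping.keys v \<subseteq> mcarrier N"
  shows "eval_fsum N (u + v) = madd N (eval_fsum N u) (eval_fsum N v)"
proof -
  define D where "D = Poly_Mapping.keys u \<union> Poly_Mapping.keys v"
  have D: "finite D" "D \<subseteq> mcarrier N" "Poly_Mapping.keys (u + v) \<subseteq> D"
    unfolding D_def using assms keys_add[of u v] by auto
  have "eval_fsum N (u + v) = finprod (amod_group N)
      (\<lambda>y. madd N (msmult N (of_int (Poly_Mapping.lookup u y)) y) (msmult N (of_int (Poly_Mapping.lookup v y)) y)) D"
    using eval_fsum_superset[OF D(1) D(3) D(2)] D(2) by (auto simp: lookup_add smult_add_left intro!: G.finprod_cong')
  also have "\<dots> = madd N (finprod (amod_group N) (\<lambda>y. msmult N (of_int (Poly_Mapping.lookup u y)) y) D)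
      (finprod (amod_group N) (\<lambda>y. msmult N (of_int (Poly_Mapping.lookup v y)) y) D)"
    by (rule G.finprod_multf[simplified]) (use D(2) in auto)
  also have "\<dots> = madd N (eval_fsum N u) (eval_fsum N v)"
    using eval_fsum_superset[OF D(1) _ D(2), of u] eval_fsum_superset[OF D(1) _ D(2), of v]
    unfolding D_def by simp
  finally show ?thesis .
qed

lemma eval_fsum_diff:
  assumes "Poly_Mapping.keys u \<subseteq> mcarrier N" "Poly_Mapping.keys v \<subseteq> mcarrier N"
  shows "eval_fsum N (u - v) = madd N (eval_fsum N u) (neg (eval_fsum N v))"
proof -
  have "Poly_Mapping.keys (u - v) \<subseteq> mcarrier N" using assms keys_diff[of u v] by auto
  then have "eval_fsum N u = madd N (eval_fsum N (u - v)) (eval_fsum N v)"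
    using eval_fsum_add[of "u - v" v] assms(2) by simp
  then show ?thesis
    using G.inv_solve_right[of "eval_fsum N (u - v)" "eval_fsum N u" "eval_fsum N v"] assms
      eval_fsum_closed \<open>Poly_Mapping.keys (u - v) \<subseteq> mcarrier N\<close> by simp
qed

end

lemma eval_fsum_submodule:
  assumes N: "is_amod N" and S: "is_submod S N" and "Poly_Mapping.keys u \<subseteq> S"
  shows "eval_fsum (N\<lparr>mcarrier := S\<rparr>) u = eval_fsum N u"
proof -
  interpret N: amodule N by (rule amodule.intro) fact
  interpret S: amodule "N\<lparr>mcarrier := S\<rparr>" by (rule amodule.intro, rule submodule_is_amod) fact+
  have "S \<subseteq> mcarrier N" using S unfolding is_submod_def by blast
  have restrict: "finprod (amod_group (N\<lparr>mcarrier := S\<rparr>)) f A = finprod (amod_group N) f A"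
    if "finite A" "f \<in> A \<rightarrow> S" for f A
    using that
  proof (induction A rule: finite_induct)
    case (insert y A)
    then have "f \<in> A \<rightarrow> mcarrier N" "f y \<in> mcarrier N" using \<open>S \<subseteq> mcarrier N\<close> by auto
    then show ?case using S.G.finprod_insert[of A y f] N.G.finprod_insert[of A y f] insert by auto
  qed simp
  have "(\<lambda>y. msmult N (of_int (Poly_Mapping.lookup u y)) y) \<in> Poly_Mapping.keys u \<rightarrow> S"
    using S assms(3) unfolding is_submod_def by auto
  from restrict[OF finite_keys[of u] this] show ?thesis unfolding eval_fsum_def by simp
qed

section \<open>Tensor relations\<close>

lemma zspan_gen: "s \<in> S \<Longrightarrow> s \<in> zspan S"
  using zspan_add[OF zspan_zero, of s S] by simp

lemma zspan_uminus: "x \<in> zspan S \<Longrightarrow> - x \<in> zspan S"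
  using zspan_diff[OF zspan_zero, of x S] by simp

lemma zspan_add_closed: "x \<in> zspan S \<Longrightarrow> y \<in> zspan S \<Longrightarrow> x + y \<in> zspan S"
  using zspan_diff[of x S "- y"] zspan_uminus[of y S] by simp

lemma zspan_sum: "(\<And>i. i \<in> D \<Longrightarrow> f i \<in> zspan S) \<Longrightarrow> sum f D \<in> zspan S"
  by (induction D rule: infinite_finite_induct) (auto intro: zspan_add_closed zspan_zero)

lemma zspan_frag_extend:
  "(\<And>k. k \<in> Poly_Mapping.keys t \<Longrightarrow> f k \<in> zspan S) \<Longrightarrow> frag_extend f t \<in> zspan S"
proof -
  have "frag_cmul c x \<in> zspan S" if "x \<in> zspan S" for c x
  proof -
    have nat: "frag_cmul (int n) x \<in> zspan S" for n
      by (induction n) (simp_all add: zspan_zero zspan_add_closed frag_cmul_distrib that)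
    show ?thesis
    proof (cases c rule: int_cases2)
      case (nonpos n)
      then show ?thesis using zspan_uminus[OF nat[of n]] by simp
    qed (simp add: nat)
  qed
  then show "(\<And>k. k \<in> Poly_Mapping.keys t \<Longrightarrow> f k \<in> zspan S) \<Longrightarrow> frag_extend f t \<in> zspan S"
    unfolding frag_extend_def by (intro zspan_sum) auto
qed

lemma tensor_rel_add: "x \<in> tensor_rel N M \<Longrightarrow> y \<in> tensor_rel N M \<Longrightarrow> x + y \<in> tensor_rel N M"
  unfolding tensor_rel_def by (rule zspan_add_closed)

lemma tensor_rel_diff: "x \<in> tensor_rel N M \<Longrightarrow> y \<in> tensor_rel N M \<Longrightarrow> x - y \<in> tensor_rel N M"
  unfolding tensor_rel_def by (rule zspan_diff)

lemma tensor_rel_uminus: "x \<in> tensor_rel N M \<Longrightarrow> - x \<in> tensor_rel N M"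
  unfolding tensor_rel_def by (rule zspan_uminus)

lemma tensor_rel_sum: "(\<And>i. i \<in> D \<Longrightarrow> f i \<in> tensor_rel N M) \<Longrightarrow> sum f D \<in> tensor_rel N M"
  unfolding tensor_rel_def by (rule zspan_sum)

lemma tensor_rel_frag_extend:
  "(\<And>k. k \<in> Poly_Mapping.keys t \<Longrightarrow> f k \<in> tensor_rel N M) \<Longrightarrow> frag_extend f t \<in> tensor_rel N M"
  unfolding tensor_rel_def by (rule zspan_frag_extend)

lemma tensor_rel_add_left:
  "n \<in> mcarrier N \<Longrightarrow> n' \<in> mcarrier N \<Longrightarrow> m \<in> mcarrier M \<Longrightarrow>
    tgen (madd N n n') m - tgen n m - tgen n' m \<in> tensor_rel N M"
  unfolding tensor_rel_def by (rule zspan_gen) blast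

lemma tensor_rel_add_right:
  "n \<in> mcarrier N \<Longrightarrow> m \<in> mcarrier M \<Longrightarrow> m' \<in> mcarrier M \<Longrightarrow>
    tgen n (madd M m m') - tgen n m - tgen n m' \<in> tensor_rel N M"
  unfolding tensor_rel_def by (rule zspan_gen) blast

lemma tensor_rel_smult:
  "n \<in> mcarrier N \<Longrightarrow> m \<in> mcarrier M \<Longrightarrow> tgen (msmult N a n) m - tgen n (msmult M a m) \<in> tensor_rel N M"
  unfolding tensor_rel_def by (rule zspan_gen) blast

lemma tgen_zero_left:
  assumes "is_amod N" "m \<in> mcarrier M"
  shows "tgen (mzero N) m \<in> tensor_rel N M"
proof -
  interpret amodule N by (rule amodule.intro) fact
  show ?thesis
    using tensor_rel_uminus[OF tensor_rel_add_left[OF zero_closed zero_closed assms(2)]] by simp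
qed

lemma tgen_zero_right:
  assumes "is_amod M" "n \<in> mcarrier N"
  shows "tgen n (mzero M) \<in> tensor_rel N M"
proof -
  interpret amodule M by (rule amodule.intro) fact
  show ?thesis
    using tensor_rel_uminus[OF tensor_rel_add_right[OF assms(2) zero_closed zero_closed]] by simp
qed

lemma (in amodule) tensor_rel_diff_left:
  assumes "x \<in> mcarrier N" "y \<in> mcarrier N" "m \<in> mcarrier M"
  shows "tgen x m - tgen y m - tgen (madd N x (neg y)) m \<in> tensor_rel N M"
proof -
  have "madd N (madd N x (neg y)) y = x"
    using assms G.m_assoc[of x "neg y" y] by simp
  then have "tgen x m - tgen (madd N x (neg y)) m - tgen y m \<in> tensor_rel N M"
    using tensor_rel_add_left[of "madd N x (neg y)" N y m M] assms by simp
  then show ?thesis by (simp add: algebra_simps)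
qed

lemma tensor_rel_eval_left:
  assumes N: "is_amod N" and m: "m \<in> mcarrier M" and "Poly_Mapping.keys u \<subseteq> mcarrier N"
  shows "frag_extend (\<lambda>y. tgen y m) u - tgen (eval_fsum N u) m \<in> tensor_rel N M"
proof -
  interpret amodule N by (rule amodule.intro) fact
  define R where "R u \<longleftrightarrow> Poly_Mapping.keys u \<subseteq> mcarrier N \<and>
      frag_extend (\<lambda>y. tgen y m) u - tgen (eval_fsum N u) m \<in> tensor_rel N M" for u
  have "R u"
    using assms(3)
  proof (induction u rule: frag_induction)
    case zero
    then show ?case using tensor_rel_uminus[OF tgen_zero_left[OF N m]] by (simp add: R_def)
  next
    case (one y)
    then show ?case by (simp add: R_def keys_frag_of tensor_rel_def zspan_zero)
  next
    case (diff a b)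
    then have keys: "Poly_Mapping.keys a \<subseteq> mcarrier N" "Poly_Mapping.keys b \<subseteq> mcarrier N"
      and rel: "frag_extend (\<lambda>y. tgen y m) a - tgen (eval_fsum N a) m \<in> tensor_rel N M"
        "frag_extend (\<lambda>y. tgen y m) b - tgen (eval_fsum N b) m \<in> tensor_rel N M"
      unfolding R_def by auto
    have "Poly_Mapping.keys (a - b) \<subseteq> mcarrier N" using keys keys_diff[of a b] by auto
    moreover have "tgen (eval_fsum N a) m - tgen (eval_fsum N b) m - tgen (eval_fsum N (a - b)) m
        \<in> tensor_rel N M"
      using tensor_rel_diff_left[OF eval_fsum_closed eval_fsum_closed m] keys eval_fsum_diff[OF keys]
      by simp
    then have "(frag_extend (\<lambda>y. tgen y m) a - tgen (eval_fsum N a) m)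
        - (frag_extend (\<lambda>y. tgen y m) b - tgen (eval_fsum N b) m)
        + (tgen (eval_fsum N a) m - tgen (eval_fsum N b) m - tgen (eval_fsum N (a - b)) m) \<in> tensor_rel N M"
      by (rule tensor_rel_add[OF tensor_rel_diff[OF rel]])
    then have "frag_extend (\<lambda>y. tgen y m) (a - b) - tgen (eval_fsum N (a - b)) m \<in> tensor_rel N M"
      by (simp add: frag_extend_diff)
    ultimately show ?case unfolding R_def by blast
  qed
  then show ?thesis unfolding R_def by blast
qed

lemma frag_extend_diff_fun: "frag_extend (\<lambda>k. f k - g k) t = frag_extend f t - frag_extend g t"
  by (induction t rule: frag_induction[OF subset_UNIV]) (simp_all add: frag_extend_diff)

lemma frag_extend_sum_fun: "frag_extend (\<lambda>k. \<Sum>E\<in>D. h E k) t = (\<Sum>E\<in>D. frag_extend (h E) t)"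
  by (induction t rule: frag_induction[OF subset_UNIV]) (simp_all add: frag_extend_diff sum_subtractf)

definition contract :: "('r::comm_ring_1, 'n) amod \<Rightarrow> ('m \<Rightarrow> 'r) \<Rightarrow> ('n \<times> 'm \<Rightarrow>\<^sub>0 int) \<Rightarrow> ('n \<Rightarrow>\<^sub>0 int)"
  where "contract N c t = frag_extend (\<lambda>k. frag_of (msmult N (c (snd k)) (fst k))) t"

lemma contract_tgen [simp]: "contract N c (tgen n m) = frag_of (msmult N (c m) n)"
  by (simp add: contract_def tgen_def)

lemma contract_add: "contract N c (x + y) = contract N c x + contract N c y"
  by (simp add: contract_def frag_extend_add)

lemma contract_diff: "contract N c (x - y) = contract N c x - contract N c y"
  by (simp add: contract_def frag_extend_diff)

lemma keys_contract:
  assumes "is_amod N" "Poly_Mapping.keys t \<subseteq> mcarrier N \<times> C"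
  shows "Poly_Mapping.keys (contract N c t) \<subseteq> mcarrier N"
proof -
  interpret amodule N by (rule amodule.intro) fact
  show ?thesis
    using keys_frag_extend[of _ t] assms(2) unfolding contract_def by (fastforce simp: keys_frag_of)
qed

lemma (in amodule) eval_fsum_add_relation:
  assumes "x \<in> mcarrier N" "y \<in> mcarrier N"
  shows "eval_fsum N (frag_of (madd N x y) - frag_of x - frag_of y) = mzero N"
proof -
  have "Poly_Mapping.keys (frag_of (madd N x y) - frag_of x) \<subseteq> mcarrier N"
    using keys_diff[of "frag_of (madd N x y)" "frag_of x"] assms by (auto simp: keys_frag_of)
  then have "eval_fsum N (frag_of (madd N x y) - frag_of x - frag_of y)
      = madd N (madd N (madd N x y) (neg x)) (neg y)"
    using assms by (simp add: eval_fsum_diff keys_frag_of)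
  also have "madd N (madd N x y) (neg x) = madd N y (madd N x (neg x))"
    using assms by (simp add: add_commute[of x y] add_assoc)
  finally show ?thesis using assms by (simp add: G.r_inv[simplified])
qed

definition tensor_gens :: "('r::comm_ring_1, 'n) amod \<Rightarrow> ('r, 'm) amod \<Rightarrow> ('n \<times> 'm \<Rightarrow>\<^sub>0 int) set"
  where "tensor_gens N M =
      {tgen (madd N n n') m - tgen n m - tgen n' m | n n' m.
          n \<in> mcarrier N \<and> n' \<in> mcarrier N \<and> m \<in> mcarrier M}
    \<union> {tgen n (madd M m m') - tgen n m - tgen n m' | n m m'.
          n \<in> mcarrier N \<and> m \<in> mcarrier M \<and> m' \<in> mcarrier M}
    \<union> {tgen (msmult N a n) m - tgen n (msmult M a m) | a n m.
          n \<in> mcarrier N \<and> m \<in> mcarrier M}"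

lemma tensor_rel_eq_zspan: "tensor_rel N M = zspan (tensor_gens N M)"
  unfolding tensor_rel_def tensor_gens_def ..

lemma keys_tensor_rel:
  fixes N :: "('r::comm_ring_1, 'n) amod" and M :: "('r, 'm) amod"
  assumes N: "is_amod N" and M: "is_amod M" and "t \<in> tensor_rel N M"
  shows "Poly_Mapping.keys t \<subseteq> mcarrier N \<times> mcarrier M"
proof -
  interpret N: amodule N by (rule amodule.intro) fact
  interpret M: amodule M by (rule amodule.intro) fact
  have keys_tgen: "Poly_Mapping.keys (tgen n m) = {(n, m)}" for n m
    by (simp add: tgen_def)
  have keys2: "Poly_Mapping.keys (x - y) \<subseteq> Poly_Mapping.keys x \<union> Poly_Mapping.keys y"
    and keys3: "Poly_Mapping.keys (x - y - z) \<subseteq> Poly_Mapping.keys x \<union> Poly_Mapping.keys y \<union> Poly_Mapping.keys z"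
    for x y z :: "'n \<times> 'm \<Rightarrow>\<^sub>0 int"
    using keys_diff[of "x - y" z] keys_diff[of x y] by blast+
  have "Poly_Mapping.keys s \<subseteq> mcarrier N \<times> mcarrier M" if "s \<in> tensor_gens N M" for s
    using that unfolding tensor_gens_def
    by (elim UnE CollectE exE conjE) (use keys2 keys3 in \<open>fastforce simp: keys_tgen\<close>)+
  with \<open>t \<in> tensor_rel N M\<close> show ?thesis
    unfolding tensor_rel_eq_zspan
  proof (induction rule: zspan.induct)
    case (zspan_add x s)
    then show ?case using keys_add[of x s] by blast
  next
    case (zspan_diff x y)
    then show ?case using keys_diff[of x y] by blast
  qed simp
qed

lemma eval_contract_tensor_gens:
  assumes N: "is_amod N" and ann: "annihilated K N"
    and add: "\<And>x y. x \<in> mcarrier M \<Longrightarrow> y \<in> mcarrier M \<Longrightarrow> c (madd M x y) - (c x + c y) \<in> K"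
    and smult: "\<And>a x. x \<in> mcarrier M \<Longrightarrow> c (msmult M a x) - a * c x \<in> K"
    and "s \<in> tensor_gens N M"
  shows "eval_fsum N (contract N c s) = mzero N"
  using \<open>s \<in> tensor_gens N M\<close> unfolding tensor_gens_def
proof (elim UnE CollectE exE conjE)
  interpret amodule N by (rule amodule.intro) fact
  fix n n' m assume "s = tgen (madd N n n') m - tgen n m - tgen n' m"
    and "n \<in> mcarrier N" "n' \<in> mcarrier N" "m \<in> mcarrier M"
  then show ?thesis
    using eval_fsum_add_relation[of "msmult N (c m) n" "msmult N (c m) n'"]
    by (simp add: contract_diff smult_add_right)
next
  interpret amodule N by (rule amodule.intro) fact
  fix n m m' assume s: "s = tgen n (madd M m m') - tgen n m - tgen n m'"
    and nm: "n \<in> mcarrier N" "m \<in> mcarrier M" "m' \<in> mcarrier M"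
  have "msmult N (c (madd M m m')) n = madd N (msmult N (c m) n) (msmult N (c m') n)"
    using smult_eq_mod_annihilator[OF ann nm(1) add[OF nm(2,3)]] smult_add_left[OF nm(1)] by simp
  then show ?thesis
    using eval_fsum_add_relation[of "msmult N (c m) n" "msmult N (c m') n"] nm
    by (simp add: s contract_diff)
next
  interpret amodule N by (rule amodule.intro) fact
  fix a n m assume s: "s = tgen (msmult N a n) m - tgen n (msmult M a m)"
    and nm: "n \<in> mcarrier N" "m \<in> mcarrier M"
  have "msmult N (c (msmult M a m)) n = msmult N (c m * a) n"
    using smult_eq_mod_annihilator[OF ann nm(1) smult[OF nm(2)]] by (simp add: mult.commute)
  also have "\<dots> = msmult N (c m) (msmult N a n)" by (rule smult_smult[OF nm(1)])
  finally show ?thesis by (simp add: s contract_diff)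
qed

text \<open>If \<open>c : M \<rightarrow> A\<close> is \<open>A\<close>-linear modulo an ideal \<open>K\<close> annihilating \<open>N\<close>, then
  \<open>n \<otimes> m \<mapsto> c(m) n\<close> is well defined on \<open>N \<otimes> M\<close>.\<close>
lemma eval_contract_tensor_rel:
  assumes N: "is_amod N" and M: "is_amod M" and ann: "annihilated K N"
    and add: "\<And>x y. x \<in> mcarrier M \<Longrightarrow> y \<in> mcarrier M \<Longrightarrow> c (madd M x y) - (c x + c y) \<in> K"
    and smult: "\<And>a x. x \<in> mcarrier M \<Longrightarrow> c (msmult M a x) - a * c x \<in> K"
    and "t \<in> tensor_rel N M"
  shows "eval_fsum N (contract N c t) = mzero N"
proof -
  interpret amodule N by (rule amodule.intro) fact
  have keys: "Poly_Mapping.keys (contract N c x) \<subseteq> mcarrier N" if "x \<in> zspan (tensor_gens N M)" for x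
    using keys_contract[OF N keys_tensor_rel[OF N M]] that unfolding tensor_rel_eq_zspan by blast
  from \<open>t \<in> tensor_rel N M\<close> show ?thesis
    unfolding tensor_rel_eq_zspan
  proof (induction rule: zspan.induct)
    case zspan_zero
    then show ?case by (simp add: contract_def)
  next
    case (zspan_add x s)
    then show ?case
      using eval_contract_tensor_gens[OF N ann add smult] keys zspan_gen[of s]
      by (simp add: contract_add eval_fsum_add)
  next
    case (zspan_diff x y)
    then show ?case using keys by (simp add: contract_diff eval_fsum_diff G.r_inv[simplified])
  qed
qed

section \<open>The quotient module\<close>

lemma mem_pcoset: "x \<in> pcoset I f \<longleftrightarrow> x - f \<in> I"
proof
  assume "x - f \<in> I"
  moreover have "x = f + (x - f)" by simp
  ultimately show "x \<in> pcoset I f" unfolding pcoset_def by blast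
qed (auto simp: pcoset_def)

lemma pcoset_eq_iff:
  assumes "is_ideal I"
  shows "pcoset I f = pcoset I g \<longleftrightarrow> f - g \<in> I"
proof
  assume "pcoset I f = pcoset I g"
  then show "f - g \<in> I" using mem_pcoset[of f I f] mem_pcoset[of f I g] is_ideal_zero[OF assms] by simp
next
  assume "f - g \<in> I"
  have "x - f \<in> I \<longleftrightarrow> x - g \<in> I" for x
    using is_ideal_add[OF assms _ \<open>f - g \<in> I\<close>, of "x - f"] is_ideal_diff[OF assms _ \<open>f - g \<in> I\<close>, of "x - g"]
    by auto
  then show "pcoset I f = pcoset I g" by (auto simp: mem_pcoset)
qed

lemma mcarrier_quot_amod [simp]: "mcarrier (quot_amod I) = range (pcoset I)"
  by (simp add: quot_amod_def)

lemma mzero_quot_amod: "is_ideal I \<Longrightarrow> mzero (quot_amod I) = pcoset I 0"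
  by (auto simp: quot_amod_def mem_pcoset)

lemma madd_quot_amod:
  assumes I: "is_ideal I"
  shows "madd (quot_amod I) (pcoset I f) (pcoset I g) = pcoset I (f + g)"
proof (intro Set.set_eqI iffI)
  fix z assume "z \<in> madd (quot_amod I) (pcoset I f) (pcoset I g)"
  then obtain x y where xy: "z = x + y" "x - f \<in> I" "y - g \<in> I"
    by (auto simp: quot_amod_def mem_pcoset)
  have "z - (f + g) = (x - f) + (y - g)" unfolding xy(1) by simp
  then show "z \<in> pcoset I (f + g)" using is_ideal_add[OF I xy(2,3)] by (simp only: mem_pcoset)
next
  fix z assume "z \<in> pcoset I (f + g)"
  then have "z - g \<in> pcoset I f" "g \<in> pcoset I g"
    using is_ideal_zero[OF I] by (simp_all add: mem_pcoset algebra_simps)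
  moreover have "z = (z - g) + g" by simp
  ultimately have "\<exists>x y. z = x + y \<and> x \<in> pcoset I f \<and> y \<in> pcoset I g" by blast
  then show "z \<in> madd (quot_amod I) (pcoset I f) (pcoset I g)" by (simp add: quot_amod_def)
qed

lemma msmult_quot_amod:
  assumes I: "is_ideal I"
  shows "msmult (quot_amod I) a (pcoset I f) = pcoset I (Poly_Mapping.single 0 a * f)"
proof (intro Set.set_eqI iffI)
  fix z assume "z \<in> msmult (quot_amod I) a (pcoset I f)"
  then obtain x i where xi: "z = Poly_Mapping.single 0 a * x + i" "x - f \<in> I" "i \<in> I"
    by (auto simp: quot_amod_def mem_pcoset)
  have "z - Poly_Mapping.single 0 a * f = Poly_Mapping.single 0 a * (x - f) + i"
    unfolding xi(1) by (simp add: algebra_simps)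
  then show "z \<in> pcoset I (Poly_Mapping.single 0 a * f)"
    using is_ideal_add[OF I is_ideal_mult_left[OF I xi(2)] xi(3)] by (simp add: mem_pcoset)
next
  fix z assume "z \<in> pcoset I (Poly_Mapping.single 0 a * f)"
  then have "z - Poly_Mapping.single 0 a * f \<in> I" "f \<in> pcoset I f"
    using is_ideal_zero[OF I] by (simp_all add: mem_pcoset)
  moreover have "z = Poly_Mapping.single 0 a * f + (z - Poly_Mapping.single 0 a * f)" by simp
  ultimately have "\<exists>x i. z = Poly_Mapping.single 0 a * x + i \<and> x \<in> pcoset I f \<and> i \<in> I" by blast
  then show "z \<in> msmult (quot_amod I) a (pcoset I f)" by (simp add: quot_amod_def)
qed

lemma quot_amod_is_amod:
  assumes I: "is_ideal I"
  shows "is_amod (quot_amod I)"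
proof -
  have neg: "\<exists>g. pcoset I (f + g) = pcoset I 0" for f
    by (intro exI[of _ "- f"]) simp
  have smult_add: "Poly_Mapping.single 0 (a + b) * f
      = Poly_Mapping.single 0 a * f + Poly_Mapping.single 0 b * f" for a b f
    by (simp add: single_add distrib_right)
  have smult_mult: "Poly_Mapping.single 0 (a * b) * f
      = Poly_Mapping.single 0 a * (Poly_Mapping.single 0 b * f)" for a b f
    by (simp add: mult_single mult.assoc[symmetric])
  show ?thesis
    unfolding is_amod_def
    by (simp add: mzero_quot_amod[OF I] madd_quot_amod[OF I] msmult_quot_amod[OF I]
        neg smult_add smult_mult add_ac distrib_left)
qed

lemma quot_amod_annihilated:
  assumes I: "is_ideal I"
  shows "annihilated (contraction I) (quot_amod I)"
  unfolding annihilated_def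
proof (intro ballI)
  fix k X assume "k \<in> contraction I" "X \<in> mcarrier (quot_amod I)"
  then obtain f where "X = pcoset I f" "Poly_Mapping.single 0 k \<in> I"
    by (auto simp: contraction_def)
  then show "msmult (quot_amod I) k X = mzero (quot_amod I)"
    using is_ideal_mult_right[OF I \<open>Poly_Mapping.single 0 k \<in> I\<close>, of f]
    by (simp add: msmult_quot_amod[OF I] mzero_quot_amod[OF I] pcoset_eq_iff[OF I])
qed

section \<open>Flatness and faithfulness\<close>

context idempotent_initial_coeffs
begin

abbreviation M where "M \<equiv> quot_amod I"

lemma M_is_amod: "is_amod M"
  by (rule quot_amod_is_amod[OF ideal])

definition std_rep :: "(('v \<Rightarrow>\<^sub>0 nat) \<Rightarrow>\<^sub>0 'a) set \<Rightarrow> ('v \<Rightarrow>\<^sub>0 nat) \<Rightarrow>\<^sub>0 'a"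
  where "std_rep X = (SOME g. standard g \<and> X = pcoset I g)"

text \<open>Only the class of \<open>coeff E X\<close> modulo \<open>K\<close> is determined by \<open>X\<close>: \<open>std_rep\<close> picks one
  standard representative among many.\<close>
definition coeff :: "('v \<Rightarrow>\<^sub>0 nat) \<Rightarrow> (('v \<Rightarrow>\<^sub>0 nat) \<Rightarrow>\<^sub>0 'a) set \<Rightarrow> 'a"
  where "coeff E X = Poly_Mapping.lookup (std_rep X) E"

lemma std_rep: "standard (std_rep (pcoset I f))" "pcoset I (std_rep (pcoset I f)) = pcoset I f"
proof -
  obtain g where "standard g" "f - g \<in> I" using exists_standard_representative by blast
  then have "\<exists>g. standard g \<and> pcoset I f = pcoset I g" using pcoset_eq_iff[OF ideal] by blast
  from someI_ex[OF this] show "standard (std_rep (pcoset I f))" "pcoset I (std_rep (pcoset I f)) = pcoset I f"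
    unfolding std_rep_def by auto
qed

lemma coeff_standard:
  assumes "standard g"
  shows "coeff E (pcoset I g) - Poly_Mapping.lookup g E \<in> K"
proof -
  have "std_rep (pcoset I g) - g \<in> I" using std_rep(2)[of g] pcoset_eq_iff[OF ideal] by simp
  from standard_in_ideal_coeffs[OF standard_diff[OF std_rep(1) assms] this, of E] show ?thesis
    by (simp add: coeff_def lookup_minus)
qed

lemma coeff_add:
  assumes "X \<in> mcarrier M" "Y \<in> mcarrier M"
  shows "coeff E (madd M X Y) - (coeff E X + coeff E Y) \<in> K"
proof -
  obtain f g where X: "X = pcoset I f" and Y: "Y = pcoset I g" using assms by auto
  have "madd M X Y = pcoset I (std_rep X + std_rep Y)"
    unfolding X Y using madd_quot_amod[OF ideal] std_rep(2) by metis
  then show ?thesis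
    using coeff_standard[OF standard_add[OF std_rep(1)[of f] std_rep(1)[of g]], of E]
    unfolding X Y by (simp add: coeff_def lookup_add)
qed

lemma coeff_smult:
  assumes "X \<in> mcarrier M"
  shows "coeff E (msmult M a X) - a * coeff E X \<in> K"
proof -
  obtain f where X: "X = pcoset I f" using assms by auto
  have "msmult M a X = pcoset I (Poly_Mapping.single 0 a * std_rep X)"
    unfolding X using msmult_quot_amod[OF ideal] std_rep(2) by metis
  then show ?thesis
    using coeff_standard[OF standard_const_mult[OF std_rep(1)[of f], where a = a], of E]
    unfolding X by (simp add: coeff_def lookup_const_mult)
qed

lemma coeff_one: "coeff 0 (pcoset I 1) - 1 \<in> K"
  using coeff_standard[OF standard_one, of 0] by simp

lemma pcoset_eq_sum_coeffs:
  assumes "finite D" "Poly_Mapping.keys (std_rep X) \<subseteq> D" "X \<in> mcarrier M"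
  shows "X = pcoset I (\<Sum>E\<in>D. Poly_Mapping.single E (coeff E X))"
  using poly_mapping_sum_single_superset[OF assms(1,2)] std_rep(2) assms(3)
  unfolding coeff_def by auto

lemma tensor_rel_expand_pcoset:
  assumes N: "is_amod N" and n: "n \<in> mcarrier N" and "finite D"
  shows "tgen n (pcoset I (\<Sum>E\<in>D. Poly_Mapping.single E (c E)))
    - (\<Sum>E\<in>D. tgen (msmult N (c E) n) (pcoset I (Poly_Mapping.single E 1))) \<in> tensor_rel N M"
  using \<open>finite D\<close>
proof (induction D rule: finite_induct)
  case empty
  then show ?case using tgen_zero_right[OF M_is_amod n] mzero_quot_amod[OF ideal] by simp
next
  case (insert E D)
  define P Q where "P = pcoset I (Poly_Mapping.single E (c E))"
    and "Q = pcoset I (\<Sum>E\<in>D. Poly_Mapping.single E (c E))"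
  have PQ: "P \<in> mcarrier M" "Q \<in> mcarrier M" "pcoset I (Poly_Mapping.single E 1) \<in> mcarrier M"
    unfolding P_def Q_def by auto
  have sum_eq: "pcoset I (\<Sum>E\<in>insert E D. Poly_Mapping.single E (c E)) = madd M P Q"
    unfolding P_def Q_def using insert.hyps madd_quot_amod[OF ideal] by simp
  have P_eq: "P = msmult M (c E) (pcoset I (Poly_Mapping.single E 1))"
    unfolding P_def using msmult_quot_amod[OF ideal] by (simp add: mult_single)
  have eq: "tgen n (pcoset I (\<Sum>E\<in>insert E D. Poly_Mapping.single E (c E)))
      - (\<Sum>E\<in>insert E D. tgen (msmult N (c E) n) (pcoset I (Poly_Mapping.single E 1)))
    = (tgen n (madd M P Q) - tgen n P - tgen n Q)
      - (tgen (msmult N (c E) n) (pcoset I (Poly_Mapping.single E 1)) - tgen n P)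
      + (tgen n Q - (\<Sum>E\<in>D. tgen (msmult N (c E) n) (pcoset I (Poly_Mapping.single E 1))))"
    using insert.hyps sum_eq by simp
  have "tgen n (madd M P Q) - tgen n P - tgen n Q \<in> tensor_rel N M"
    using tensor_rel_add_right[OF n PQ(1,2)] .
  moreover have "tgen (msmult N (c E) n) (pcoset I (Poly_Mapping.single E 1)) - tgen n P \<in> tensor_rel N M"
    using tensor_rel_smult[OF n PQ(3)] P_eq by simp
  ultimately show ?case
    unfolding eq by (rule tensor_rel_add[OF tensor_rel_diff insert.IH[folded Q_def]])
qed

text \<open>Every element of \<open>N \<otimes> M\<close> is \<open>\<Sum>\<^sub>E n\<^sub>E \<otimes> x\<^sup>E\<close>, with \<open>n\<^sub>E\<close> given by contracting
  against the coefficient of \<open>x\<^sup>E\<close> in standard representatives.\<close>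
lemma tensor_rel_expand:
  assumes N: "is_amod N" and t: "Poly_Mapping.keys t \<subseteq> mcarrier N \<times> mcarrier M"
  shows "\<exists>D. finite D \<and> t - (\<Sum>E\<in>D. frag_extend (\<lambda>y. tgen y (pcoset I (Poly_Mapping.single E 1)))
      (contract N (coeff E) t)) \<in> tensor_rel N M"
proof -
  define D where "D = (\<Union>k\<in>Poly_Mapping.keys t. Poly_Mapping.keys (std_rep (snd k)))"
  define h where "h E k = tgen (msmult N (coeff E (snd k)) (fst k)) (pcoset I (Poly_Mapping.single E 1))"
    for E k
  have "finite D" unfolding D_def by simp
  have "frag_extend (\<lambda>y. tgen y (pcoset I (Poly_Mapping.single E 1))) (contract N (coeff E) t)
      = frag_extend (h E) t" for E
    unfolding contract_def h_def tgen_def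
    using frag_extend_compose[of "\<lambda>y. frag_of (y, _)" "\<lambda>k. msmult N (coeff E (snd k)) (fst k)" t]
    by (simp add: comp_def)
  then have "t - (\<Sum>E\<in>D. frag_extend (\<lambda>y. tgen y (pcoset I (Poly_Mapping.single E 1)))
      (contract N (coeff E) t)) = frag_extend (\<lambda>k. tgen (fst k) (snd k) - (\<Sum>E\<in>D. h E k)) t"
    by (simp add: frag_extend_diff_fun frag_extend_sum_fun tgen_def flip: frag_expansion)
  also have "\<dots> \<in> tensor_rel N M"
  proof (rule tensor_rel_frag_extend)
    fix k assume k: "k \<in> Poly_Mapping.keys t"
    then have "fst k \<in> mcarrier N" "snd k \<in> mcarrier M" using t by auto
    moreover have "Poly_Mapping.keys (std_rep (snd k)) \<subseteq> D" unfolding D_def using k by blast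
    ultimately have "tgen (fst k) (snd k)
        = tgen (fst k) (pcoset I (\<Sum>E\<in>D. Poly_Mapping.single E (coeff E (snd k))))"
      using pcoset_eq_sum_coeffs[OF \<open>finite D\<close>] by (intro arg_cong[where f = "tgen (fst k)"]) blast
    then show "tgen (fst k) (snd k) - (\<Sum>E\<in>D. h E k) \<in> tensor_rel N M"
      using tensor_rel_expand_pcoset[OF N \<open>fst k \<in> mcarrier N\<close> \<open>finite D\<close>, of "\<lambda>E. coeff E (snd k)"]
      unfolding h_def by (simp only:)
  qed
  finally show ?thesis using \<open>finite D\<close> by blast
qed

lemma flat: "flat_over TYPE('n) K M"
  unfolding flat_over_def
proof (intro allI impI; elim conjE)
  fix N :: "('a, 'n) amod" and S t
  assume N: "is_amod N" and ann: "annihilated K N" and S: "is_submod S N"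
    and t_keys: "Poly_Mapping.keys t \<subseteq> S \<times> mcarrier M" and t: "t \<in> tensor_rel N M"
  define N' where "N' = N\<lparr>mcarrier := S\<rparr>"
  have N': "is_amod N'" unfolding N'_def by (rule submodule_is_amod[OF N S])
  have contract_N': "contract N' = contract N" unfolding N'_def contract_def by simp
  obtain D where "finite D" and expand: "t - (\<Sum>E\<in>D. frag_extend (\<lambda>y. tgen y (pcoset I (Poly_Mapping.single E 1)))
      (contract N' (coeff E) t)) \<in> tensor_rel N' M"
    using tensor_rel_expand[OF N'] t_keys unfolding N'_def by auto
  have "frag_extend (\<lambda>y. tgen y (pcoset I (Poly_Mapping.single E 1))) (contract N (coeff E) t)
      \<in> tensor_rel N' M" for E
  proof -
    have "Poly_Mapping.keys (contract N' (coeff E) t) \<subseteq> S"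
      using keys_contract[OF N', of t "mcarrier M" "coeff E"] t_keys unfolding N'_def by simp
    then have keys: "Poly_Mapping.keys (contract N (coeff E) t) \<subseteq> S" by (simp add: contract_N')
    have "eval_fsum N' (contract N (coeff E) t) = eval_fsum N (contract N (coeff E) t)"
      unfolding N'_def by (rule eval_fsum_submodule[OF N S keys])
    also have "\<dots> = mzero N"
      by (rule eval_contract_tensor_rel[where c = "coeff E", OF N M_is_amod ann coeff_add coeff_smult t])
    finally have zero_rel: "tgen (eval_fsum N' (contract N (coeff E) t)) (pcoset I (Poly_Mapping.single E 1))
        \<in> tensor_rel N' M"
      using tgen_zero_left[OF N', of "pcoset I (Poly_Mapping.single E 1)" M] unfolding N'_def by simp
    have "frag_extend (\<lambda>y. tgen y (pcoset I (Poly_Mapping.single E 1))) (contract N (coeff E) t)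
        - tgen (eval_fsum N' (contract N (coeff E) t)) (pcoset I (Poly_Mapping.single E 1)) \<in> tensor_rel N' M"
      using tensor_rel_eval_left[OF N', of "pcoset I (Poly_Mapping.single E 1)" M] keys
      unfolding N'_def by simp
    from tensor_rel_add[OF this zero_rel] show ?thesis by simp
  qed
  then have "(\<Sum>E\<in>D. frag_extend (\<lambda>y. tgen y (pcoset I (Poly_Mapping.single E 1)))
      (contract N' (coeff E) t)) \<in> tensor_rel N' M"
    unfolding contract_N' by (rule tensor_rel_sum)
  from tensor_rel_add[OF expand this] show "t \<in> tensor_rel (N\<lparr>mcarrier := S\<rparr>) M"
    unfolding N'_def by simp
qed

lemma faithful:
  fixes N :: "('a, 'n) amod"
  assumes N: "is_amod N" and ann: "annihilated K N"
    and zero: "\<forall>t. Poly_Mapping.keys t \<subseteq> mcarrier N \<times> mcarrier M \<longrightarrow> t \<in> tensor_rel N M"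
  shows "mcarrier N = {mzero N}"
proof -
  interpret amodule N by (rule amodule.intro) fact
  have "n = mzero N" if n: "n \<in> mcarrier N" for n
  proof -
    have "tgen n (pcoset I 1) \<in> tensor_rel N M"
      using zero n by (auto simp: tgen_def)
    from eval_contract_tensor_rel[where c = "coeff 0", OF N M_is_amod ann coeff_add coeff_smult this]
    have "msmult N (coeff 0 (pcoset I 1)) n = mzero N" using n by simp
    moreover have "msmult N (coeff 0 (pcoset I 1)) n = n"
      using smult_eq_mod_annihilator[OF ann n coeff_one] n by simp
    ultimately show ?thesis by simp
  qed
  then show ?thesis by auto
qed

end

theorem proposition4p3:
  fixes ord :: "('v::finite \<Rightarrow>\<^sub>0 nat) \<Rightarrow> ('v \<Rightarrow>\<^sub>0 nat) \<Rightarrow> bool"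
    and I :: "(('v \<Rightarrow>\<^sub>0 nat) \<Rightarrow>\<^sub>0 'a::comm_ring_1) set"
  assumes "noetherian TYPE('a)"
    and "monomial_order ord"
    and "is_ideal I"
    and "I \<noteq> UNIV"
    and "\<And>p E. prime_ideal p \<Longrightarrow>
           ext_is_zero p (contraction I) (coeff_ideal (init_ideal ord I) E)
         \<or> ext_is_unit p (contraction I) (coeff_ideal (init_ideal ord I) E)"
  shows "faithfully_flat_over TYPE('n) (contraction I) (quot_amod I)"
proof -
  have "\<exists>e\<in>coeff_ideal (init_ideal ord I) E.
      \<forall>x\<in>coeff_ideal (init_ideal ord I) E. (1 - e) * x \<in> contraction I" for E
  proof (rule idempotent_generator_of_locally_zero_or_unit)
    show "is_ideal (coeff_ideal (init_ideal ord I) E)"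
      unfolding init_ideal_def by (intro coeff_ideal_is_ideal gen_ideal_is_ideal)
    show "contraction I \<subseteq> coeff_ideal (init_ideal ord I) E"
      using contraction_subset_lead_coeffs coeff_init_ideal_eq_lead_coeffs assms(2,3) by blast
  qed (use assms contraction_is_ideal in auto)
  then obtain e where "\<And>E. e E \<in> coeff_ideal (init_ideal ord I) E \<and>
      (\<forall>x\<in>coeff_ideal (init_ideal ord I) E. (1 - e E) * x \<in> contraction I)"
    by metis
  then interpret idempotent_initial_coeffs ord I e
    by unfold_locales (use assms(2,3) in auto)
  show ?thesis
    unfolding faithfully_flat_over_def
    using M_is_amod quot_amod_annihilated[OF ideal] flat faithful by blast
qed

end
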